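(* Let $\pi$ be a probability distribution on a measurable space $(\mathcal{X},\mathcal{B}(\mathcal{X}))$ with density $\pi(x)=\tilde{\pi}(x)/Z$ with respect to a dominating measure $\mu$, where $Z=\int_{\mathcal{X}}\tilde{\pi}(x)\mu(dx)\in(0,\infty)$. Let $q_1,\dots,q_K$ be probability densities on $\mathcal{X}$ with respect to $\mu$, and suppose there are positive constants $C_-$ and $C_+$ such that for every $i\in\{1,\dots,K\}$, $\inf_{x\in\mathcal{X}}q_i(x)\geq C_->0$ and $\sup_{x\in\mathcal{X}}q_i(x)\leq C_+<\infty$. Let $\alpha$ be any probability distribution on $\{1,\dots,K\}$, write $\alpha_k=\alpha(k)$, and let $N\geq 1$. Let $(X_n,L_n)$, $n=1,\dots,N$, be i.i.d. with $L_n\sim\alpha$ and $X_n\mid L_n\sim q_{L_n}$, and define $$\widehat{Z}_{BH}=\sum_{n=1}^{N}\frac{\tilde{\pi}(X_n)}{\sum_{m=1}^{N}q_{L_m}(X_n)},\qquad \widehat{Z}_{RB}=\frac{1}{N}\sum_{n=1}^{N}\frac{\tilde{\pi}(X_n)}{\sum_{k=1}^{K}\alpha(k)q_k(X_n)}.$$ Then $$-\frac{\tilde{C}_-}{N}\leq \operatorname{var}\left(\widehat{Z}_{BH}/Z\right)-\operatorname{var}\left(\widehat{Z}_{RB}/Z\right)\leq\frac{\tilde{C}_+}{N^2}$$ for some constants $\tilde{C}_-,\tilde{C}_+>0$.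
   Context: $\widehat{Z}_{BH}$ is the balance heuristic multiple importance sampling estimator of $Z$ with proposal labels drawn at random from $\alpha$, and $\widehat{Z}_{RB}$ is the Rao-Blackwellized importance sampling estimator using the mixture $\sum_k\alpha(k)q_k$ as proposal. *)

theory Defs
  imports "HOL-Probability.Probability"
begin

text \<open>Law of one pair (X,L): L ~ alpha on {1..K}, X | L ~ q_L (density w.r.t. the
  dominating measure M = mu).  Joint density alpha(l) q_l(x) w.r.t. mu x counting measure.\<close>
definition pair_law :: "'a measure \<Rightarrow> (nat \<Rightarrow> 'a \<Rightarrow> real) \<Rightarrow> (nat \<Rightarrow> real) \<Rightarrow> nat \<Rightarrow> ('a \<times> nat) measure" where
  "pair_law M q \<alpha> K = density (M \<Otimes>\<^sub>M count_space {1..K}) (\<lambda>(x, l). ennreal (\<alpha> l * q l x))"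

definition sample_law :: "'a measure \<Rightarrow> (nat \<Rightarrow> 'a \<Rightarrow> real) \<Rightarrow> (nat \<Rightarrow> real) \<Rightarrow> nat \<Rightarrow> nat \<Rightarrow> (nat \<Rightarrow> 'a \<times> nat) measure" where
  "sample_law M q \<alpha> K N = (\<Pi>\<^sub>M n\<in>{1..N}. pair_law M q \<alpha> K)"

definition Z_BH :: "('a \<Rightarrow> real) \<Rightarrow> (nat \<Rightarrow> 'a \<Rightarrow> real) \<Rightarrow> nat \<Rightarrow> (nat \<Rightarrow> 'a \<times> nat) \<Rightarrow> real" where
  "Z_BH pt q N \<omega> = (\<Sum>n\<in>{1..N}. pt (fst (\<omega> n)) / (\<Sum>m\<in>{1..N}. q (snd (\<omega> m)) (fst (\<omega> n))))"

definition Z_RB :: "('a \<Rightarrow> real) \<Rightarrow> (nat \<Rightarrow> 'a \<Rightarrow> real) \<Rightarrow> (nat \<Rightarrow> real) \<Rightarrow> nat \<Rightarrow> nat \<Rightarrow> (nat \<Rightarrow> 'a \<times> nat) \<Rightarrow> real" where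
  "Z_RB pt q \<alpha> K N \<omega> = (1 / real N) * (\<Sum>n\<in>{1..N}. pt (fst (\<omega> n)) / (\<Sum>k\<in>{1..K}. \<alpha> k * q k (fst (\<omega> n))))"

definition variance_of :: "'b measure \<Rightarrow> ('b \<Rightarrow> real) \<Rightarrow> real" where
  "variance_of P f = (\<integral>\<omega>. (f \<omega> - (\<integral>\<omega>'. f \<omega>' \<partial>P))\<^sup>2 \<partial>P)"

end

theory Submission
  imports Defs
begin

text \<open>Both estimators are unbiased for \<open>Z\<close>, so their variances differ by the difference of
  their second moments. Given the labels \<open>L\<close>, the samples are independent with densities
  \<open>q (L n)\<close>, and \<open>Z_BH = \<Sum>n. u (X n)\<close> with \<open>u = pt / D\<close>, where
  \<open>D = \<Sum>m. q (L m)\<close> depends on the labels only. Hence the conditional second moment is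
  \<open>Z\<^sup>2 + \<integral> pt\<^sup>2 / D - \<Sum>n. a n\<^sup>2\<close> with \<open>\<Sum>n. a n = Z\<close>, which is at most
  \<open>Z\<^sup>2 - Z\<^sup>2 / N + \<integral> pt\<^sup>2 / D\<close> by Cauchy-Schwarz. Averaged over the labels, \<open>D y\<close> is a
  sum of \<open>N\<close> i.i.d. terms with mean \<open>N * mixture y\<close> and bounded variance; expanding \<open>1 / D\<close>
  to second order around this mean, the linear term averages out, and the average of
  \<open>1 / D y\<close> exceeds \<open>1 / (N * mixture y)\<close> by at most \<open>Cp\<^sup>2 / (Cm\<^sup>3 N\<^sup>2)\<close>. The second
  moment of \<open>Z_RB\<close> is exactly \<open>Z\<^sup>2 - Z\<^sup>2 / N + (\<integral> pt\<^sup>2 / mixture) / N\<close>, so the variance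
  difference is at most \<open>Cp\<^sup>2 / (Cm\<^sup>3 N\<^sup>2) * \<integral> pt\<^sup>2\<close>; it is at least
  \<open>- var Z_RB \<ge> - (\<integral> pt\<^sup>2) / (Cm N)\<close>.\<close>

text \<open>Keeps \<open>1\<close> from being rewritten to \<open>Suc 0\<close>, which would break the index sets
  \<open>{1..N}\<close> and \<open>{1..K}\<close>.\<close>
declare One_nat_def[simp del]

lemma variance_of_nonneg: "0 \<le> variance_of P f"
  unfolding variance_of_def by (rule integral_nonneg_AE) simp

lemma variance_of_divide: "variance_of P (\<lambda>\<omega>. f \<omega> / c) = variance_of P f / c\<^sup>2"
proof -
  have "variance_of P (\<lambda>\<omega>. f \<omega> / c) = (\<integral>\<omega>. (f \<omega> - (\<integral>\<omega>'. f \<omega>' \<partial>P))\<^sup>2 / c\<^sup>2 \<partial>P)"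
    unfolding variance_of_def by (simp add: diff_divide_distrib[symmetric] power_divide)
  then show ?thesis by (simp add: variance_of_def)
qed

lemma (in prob_space) variance_of_eq_moments:
  assumes f: "integrable M f" and f2: "integrable M (\<lambda>\<omega>. (f \<omega>)\<^sup>2)"
  shows "variance_of M f = (\<integral>\<omega>. (f \<omega>)\<^sup>2 \<partial>M) - (\<integral>\<omega>. f \<omega> \<partial>M)\<^sup>2"
proof -
  define m where "m = (\<integral>\<omega>. f \<omega> \<partial>M)"
  have "variance_of M f = (\<integral>\<omega>. (f \<omega>)\<^sup>2 + m\<^sup>2 - 2 * m * f \<omega> \<partial>M)"
    unfolding variance_of_def m_def[symmetric] by (simp add: power2_diff mult_ac)
  also have "\<dots> = (\<integral>\<omega>. (f \<omega>)\<^sup>2 \<partial>M) + m\<^sup>2 - 2 * m * m"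
    using f f2 by (simp add: m_def prob_space)
  finally show ?thesis by (simp add: m_def power2_eq_square)
qed

lemma (in prob_space) variance_of_eq_0_if_not_square_integrable:
  assumes f: "f \<in> borel_measurable M" and f2: "\<not> integrable M (\<lambda>\<omega>. (f \<omega>)\<^sup>2)"
  shows "variance_of M f = 0"
proof -
  define m where "m = (\<integral>\<omega>. f \<omega> \<partial>M)"
  have "\<not> integrable M (\<lambda>\<omega>. (f \<omega> - m)\<^sup>2)"
  proof
    assume "integrable M (\<lambda>\<omega>. (f \<omega> - m)\<^sup>2)"
    then have bound: "integrable M (\<lambda>\<omega>. 2 * (f \<omega> - m)\<^sup>2 + 2 * m\<^sup>2)" by simp
    have "norm ((f \<omega>)\<^sup>2) \<le> norm (2 * (f \<omega> - m)\<^sup>2 + 2 * m\<^sup>2)" for \<omega>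
    proof -
      have "0 \<le> (f \<omega> - 2 * m)\<^sup>2" by simp
      then show ?thesis by (simp add: power2_eq_square algebra_simps)
    qed
    then have "integrable M (\<lambda>\<omega>. (f \<omega>)\<^sup>2)"
      using f by (intro Bochner_Integration.integrable_bound[OF bound] AE_I2) simp_all
    with f2 show False ..
  qed
  then show ?thesis unfolding variance_of_def m_def by (rule not_integrable_integral_eq)
qed

lemma inverse_le_second_order:
  fixes D \<mu> m :: real
  assumes m: "0 < m" "m \<le> D" and \<mu>: "0 < \<mu>"
  shows "1 / D \<le> 1 / \<mu> - (D - \<mu>) / \<mu>\<^sup>2 + (D - \<mu>)\<^sup>2 / (\<mu>\<^sup>2 * m)"
proof -
  have "1 / D = 1 / \<mu> - (D - \<mu>) / \<mu>\<^sup>2 + (D - \<mu>)\<^sup>2 / (\<mu>\<^sup>2 * D)"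
    using m \<mu> by (simp add: field_simps power2_eq_square)
  moreover have "(D - \<mu>)\<^sup>2 / (\<mu>\<^sup>2 * D) \<le> (D - \<mu>)\<^sup>2 / (\<mu>\<^sup>2 * m)"
    using m \<mu> by (intro divide_left_mono mult_left_mono mult_pos_pos) auto
  ultimately show ?thesis by linarith
qed

lemma sum_square_replace_diagonal:
  fixes a b :: "'i \<Rightarrow> real"
  assumes "finite I"
  shows "(\<Sum>n\<in>I. \<Sum>n'\<in>I. if n = n' then b n else a n * a n')
       = sum b I + (sum a I)\<^sup>2 - (\<Sum>n\<in>I. (a n)\<^sup>2)"
proof -
  have "(\<Sum>n'\<in>I. if n = n' then b n else a n * a n') = (\<Sum>n'\<in>I. a n * a n') + (b n - (a n)\<^sup>2)"
    if "n \<in> I" for n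
  proof -
    have "(\<Sum>n'\<in>I. if n = n' then b n else a n * a n')
        = (\<Sum>n'\<in>I. a n * a n' + (if n = n' then b n - (a n)\<^sup>2 else 0))"
      by (rule sum.cong) (auto simp: power2_eq_square)
    then show ?thesis using assms that by (simp add: sum.distrib)
  qed
  then have "(\<Sum>n\<in>I. \<Sum>n'\<in>I. if n = n' then b n else a n * a n')
      = (\<Sum>n\<in>I. \<Sum>n'\<in>I. a n * a n') + sum b I - (\<Sum>n\<in>I. (a n)\<^sup>2)"
    by (simp add: sum.distrib sum_subtractf)
  then show ?thesis by (simp add: power2_eq_square sum_product)
qed

locale mis_model =
  fixes M :: "'a measure" and pt :: "'a \<Rightarrow> real" and q :: "nat \<Rightarrow> 'a \<Rightarrow> real"
    and \<alpha> :: "nat \<Rightarrow> real" and K :: nat and Cm Cp :: real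
  assumes pt_meas[measurable]: "pt \<in> borel_measurable M"
    and pt_nonneg: "\<forall>x\<in>space M. 0 \<le> pt x"
    and pt_int: "integrable M pt"
    and Z_pos: "0 < (\<integral>x. pt x \<partial>M)"
    and q_dens: "\<forall>k\<in>{1..K}. q k \<in> borel_measurable M \<and> integrable M (q k) \<and> (\<integral>x. q k x \<partial>M) = 1"
    and Cm_pos: "0 < Cm" and Cp_pos: "0 < Cp"
    and q_bounds: "\<forall>k\<in>{1..K}. \<forall>x\<in>space M. Cm \<le> q k x \<and> q k x \<le> Cp"
    and \<alpha>_nonneg: "\<forall>k\<in>{1..K}. 0 \<le> \<alpha> k"
    and \<alpha>_sum: "(\<Sum>k\<in>{1..K}. \<alpha> k) = 1"
begin

abbreviation "S \<equiv> {1..K}"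
abbreviation "labelings I \<equiv> PiE I (\<lambda>_. S)"
abbreviation "Q \<equiv> pair_law M q \<alpha> K"
abbreviation "Z \<equiv> \<integral>x. pt x \<partial>M"

definition pair_density :: "'a \<times> nat \<Rightarrow> ennreal" where
  "pair_density = (\<lambda>(x, l). ennreal (\<alpha> l * q l x))"

definition label_prob :: "nat set \<Rightarrow> (nat \<Rightarrow> nat) \<Rightarrow> real" where
  "label_prob I ls = (\<Prod>n\<in>I. \<alpha> (ls n))"

lemma q_meas[measurable]: "k \<in> S \<Longrightarrow> q k \<in> borel_measurable M"
  and q_int: "k \<in> S \<Longrightarrow> integrable M (q k)"
  and q_integral: "k \<in> S \<Longrightarrow> (\<integral>x. q k x \<partial>M) = 1"
  and q_lower: "k \<in> S \<Longrightarrow> x \<in> space M \<Longrightarrow> Cm \<le> q k x"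
  and q_upper: "k \<in> S \<Longrightarrow> x \<in> space M \<Longrightarrow> q k x \<le> Cp"
  using q_dens q_bounds by auto

lemma q_nonneg: "k \<in> S \<Longrightarrow> x \<in> space M \<Longrightarrow> 0 \<le> q k x"
  using q_lower Cm_pos by (meson less_imp_le order.trans)

lemma one_in_labels: "1 \<in> S"
  using \<alpha>_sum by (cases K) auto

lemma label_prob_nonneg: "ls \<in> labelings I \<Longrightarrow> 0 \<le> label_prob I ls"
  using \<alpha>_nonneg by (auto simp: label_prob_def intro!: prod_nonneg)

text \<open>A density bounded below by \<open>Cm > 0\<close> forces \<open>M\<close> to be finite.\<close>
lemma finite_measure_M: "finite_measure M"
proof
  have "ennreal Cm * emeasure M (space M) = (\<integral>\<^sup>+x. ennreal Cm \<partial>M)"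
    by (simp add: nn_integral_const)
  also have "\<dots> \<le> (\<integral>\<^sup>+x. ennreal (q 1 x) \<partial>M)"
    using one_in_labels by (intro nn_integral_mono ennreal_leI q_lower) auto
  also have "\<dots> = 1"
    using one_in_labels q_nonneg q_integral
    by (subst nn_integral_eq_integral) (auto intro: q_int AE_I2)
  finally have "ennreal Cm * emeasure M (space M) \<le> 1" .
  then show "emeasure M (space M) \<noteq> \<infinity>"
    using Cm_pos by (auto simp: ennreal_mult_top top_unique)
qed

interpretation M: finite_measure M by (rule finite_measure_M)

lemma pair_density_meas[measurable]: "pair_density \<in> borel_measurable (M \<Otimes>\<^sub>M count_space S)"
proof -
  have "(\<lambda>y. (\<lambda>l y. ennreal (\<alpha> l * q l (fst y))) (snd y) y) \<in> borel_measurable (M \<Otimes>\<^sub>M count_space S)"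
    by (rule measurable_compose_countable'[where I=S]) auto
  then show ?thesis by (simp add: pair_density_def case_prod_beta')
qed

lemma pair_law_eq: "Q = density (M \<Otimes>\<^sub>M count_space S) pair_density"
  unfolding pair_law_def pair_density_def ..

lemma sets_pair_law: "sets Q = sets (M \<Otimes>\<^sub>M count_space S)"
  unfolding pair_law_eq by (rule sets_density)

lemma measurable_pair_law_range: "measurable N Q = measurable N (M \<Otimes>\<^sub>M count_space S)"
  by (rule measurable_cong_sets[OF refl sets_pair_law])

lemma measurable_pair_law_domain: "measurable Q N = measurable (M \<Otimes>\<^sub>M count_space S) N"
  by (rule measurable_cong_sets[OF sets_pair_law refl])

lemma space_sample:
  "\<omega> \<in> space (PiM I (\<lambda>_. Q)) \<Longrightarrow> n \<in> I \<Longrightarrow> fst (\<omega> n) \<in> space M \<and> snd (\<omega> n) \<in> S"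
  by (auto simp: space_PiM pair_law_eq space_pair_measure PiE_def Pi_def)

lemma labelled_meas: "f \<in> measurable N M \<Longrightarrow> l \<in> S \<Longrightarrow> (\<lambda>p. (f p, l)) \<in> measurable N Q"
  unfolding measurable_pair_law_range by (intro measurable_Pair) auto

lemma nn_integral_pair_law:
  assumes h[measurable]: "h \<in> borel_measurable (M \<Otimes>\<^sub>M count_space S)"
  shows "(\<integral>\<^sup>+y. h y \<partial>Q) = (\<Sum>l\<in>S. \<integral>\<^sup>+x. ennreal (\<alpha> l * q l x) * h (x, l) \<partial>M)"
proof -
  interpret C: finite_measure "count_space S" by (rule finite_measure_count_space) simp
  interpret MC: pair_sigma_finite M "count_space S" ..
  have "(\<integral>\<^sup>+y. h y \<partial>Q) = (\<integral>\<^sup>+y. pair_density y * h y \<partial>(M \<Otimes>\<^sub>M count_space S))"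
    unfolding pair_law_eq by (rule nn_integral_density) measurable
  also have "\<dots> = (\<integral>\<^sup>+l. \<integral>\<^sup>+x. pair_density (x, l) * h (x, l) \<partial>M \<partial>count_space S)"
    by (subst MC.nn_integral_snd[symmetric]) auto
  also have "\<dots> = (\<Sum>l\<in>S. \<integral>\<^sup>+x. ennreal (\<alpha> l * q l x) * h (x, l) \<partial>M)"
    by (subst nn_integral_count_space_finite) (auto simp: pair_density_def)
  finally show ?thesis .
qed

lemma prob_space_pair_law: "prob_space Q"
proof
  have "emeasure Q (space Q) = (\<Sum>l\<in>S. \<integral>\<^sup>+x. ennreal (\<alpha> l * q l x) \<partial>M)"
    by (subst nn_integral_pair_law[of "\<lambda>_. 1", simplified, symmetric]) (auto simp: sets_pair_law)
  also have "\<dots> = (\<Sum>l\<in>S. ennreal (\<alpha> l))"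
  proof (rule sum.cong[OF refl])
    fix l assume l: "l \<in> S"
    have "(\<integral>\<^sup>+x. ennreal (\<alpha> l * q l x) \<partial>M) = ennreal (\<integral>x. \<alpha> l * q l x \<partial>M)"
      using l \<alpha>_nonneg q_nonneg by (intro nn_integral_eq_integral integrable_mult_right q_int AE_I2) auto
    then show "(\<integral>\<^sup>+x. ennreal (\<alpha> l * q l x) \<partial>M) = ennreal (\<alpha> l)"
      using l q_integral by simp
  qed
  also have "\<dots> = 1"
    using \<alpha>_nonneg \<alpha>_sum by (subst sum_ennreal) auto
  finally show "emeasure Q (space Q) = 1" .
qed

interpretation sample: product_prob_space "\<lambda>_::nat. Q"
  by (intro product_prob_spaceI prob_space_pair_law)
interpretation M_prod: product_sigma_finite "\<lambda>_::nat. M"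
  unfolding product_sigma_finite_def using M.sigma_finite_measure_axioms by blast

lemma labelled_sample_meas:
  "ls \<in> labelings J \<Longrightarrow> (\<lambda>x. \<lambda>n\<in>J. (x n, ls n)) \<in> measurable (PiM J (\<lambda>_. M)) (PiM J (\<lambda>_. Q))"
  by (rule measurable_restrict) (auto intro!: labelled_meas)

lemma prod_pair_density_meas:
  assumes ls: "ls \<in> labelings J"
  shows "(\<lambda>x. \<Prod>n\<in>J. pair_density (x n, ls n)) \<in> borel_measurable (PiM J (\<lambda>_. M))"
proof -
  have "(\<lambda>x. (x n, ls n)) \<in> measurable (PiM J (\<lambda>_. M)) (M \<Otimes>\<^sub>M count_space S)" if "n \<in> J" for n
    using labelled_meas[OF measurable_component_singleton[OF that] PiE_mem[OF ls that]]
    by (simp add: measurable_pair_law_range)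
  then show ?thesis
    by (intro borel_measurable_prod_ennreal measurable_compose[OF _ pair_density_meas])
qed

lemma nn_integral_label_update_meas:
  assumes l: "l \<in> S" and G[measurable]: "G \<in> borel_measurable (PiM (insert i I) (\<lambda>_. Q))"
  shows "(\<lambda>w. \<integral>\<^sup>+x. ennreal (\<alpha> l * q l x) * G (w(i := (x, l))) \<partial>M) \<in> borel_measurable (PiM I (\<lambda>_. Q))"
proof -
  have "(\<lambda>p. (fst p)(i := (snd p, l))) \<in> measurable (PiM I (\<lambda>_. Q) \<Otimes>\<^sub>M M) (PiM (insert i I) (\<lambda>_. Q))"
    by (rule measurable_fun_upd[where J=I]) (auto intro: labelled_meas l)
  then have "(\<lambda>p. G ((fst p)(i := (snd p, l)))) \<in> borel_measurable (PiM I (\<lambda>_. Q) \<Otimes>\<^sub>M M)"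
    by (rule measurable_compose) (rule G)
  then have "(\<lambda>(w, x). ennreal (\<alpha> l * q l x) * G (w(i := (x, l)))) \<in> borel_measurable (PiM I (\<lambda>_. Q) \<Otimes>\<^sub>M M)"
    using l by (simp add: case_prod_beta')
  then show ?thesis by (rule M.borel_measurable_nn_integral)
qed

lemma nn_integral_label_update:
  assumes I: "finite I" "i \<notin> I" and l: "l \<in> S" and ls: "ls \<in> labelings I"
    and G[measurable]: "G \<in> borel_measurable (PiM (insert i I) (\<lambda>_. Q))"
  shows "(\<integral>\<^sup>+x. (\<Prod>n\<in>insert i I. pair_density (x n, (ls(i:=l)) n)) *
              G (\<lambda>n\<in>insert i I. (x n, (ls(i:=l)) n)) \<partial>PiM (insert i I) (\<lambda>_. M))
       = (\<integral>\<^sup>+x. (\<Prod>n\<in>I. pair_density (x n, ls n)) *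
              (\<integral>\<^sup>+y. ennreal (\<alpha> l * q l y) * G ((\<lambda>n\<in>I. (x n, ls n))(i := (y, l))) \<partial>M) \<partial>PiM I (\<lambda>_. M))"
proof -
  let ?r = "\<lambda>x. \<lambda>n\<in>I. (x n, ls n)"
  have ls': "ls(i:=l) \<in> labelings (insert i I)"
    using l ls I by (auto simp: PiE_def extensional_def)
  have factor: "(\<Prod>n\<in>insert i I. pair_density ((x(i:=y)) n, (ls(i:=l)) n)) *
        G (\<lambda>n\<in>insert i I. ((x(i:=y)) n, (ls(i:=l)) n))
      = (\<Prod>n\<in>I. pair_density (x n, ls n)) * (ennreal (\<alpha> l * q l y) * G ((?r x)(i := (y, l))))" for x y
  proof -
    have "(\<Prod>n\<in>I. pair_density ((x(i:=y)) n, (ls(i:=l)) n)) = (\<Prod>n\<in>I. pair_density (x n, ls n))"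
      using I by (intro prod.cong) auto
    moreover have "(\<lambda>n\<in>insert i I. ((x(i:=y)) n, (ls(i:=l)) n)) = (?r x)(i := (y, l))"
      using I by (auto simp: restrict_def)
    ultimately show ?thesis
      using I by (simp add: prod.insert pair_density_def mult_ac)
  qed
  have "(\<integral>\<^sup>+x. (\<Prod>n\<in>insert i I. pair_density (x n, (ls(i:=l)) n)) *
              G (\<lambda>n\<in>insert i I. (x n, (ls(i:=l)) n)) \<partial>PiM (insert i I) (\<lambda>_. M))
     = (\<integral>\<^sup>+x. \<integral>\<^sup>+y. (\<Prod>n\<in>insert i I. pair_density ((x(i:=y)) n, (ls(i:=l)) n)) *
              G (\<lambda>n\<in>insert i I. ((x(i:=y)) n, (ls(i:=l)) n)) \<partial>M \<partial>PiM I (\<lambda>_. M))"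
    using prod_pair_density_meas[OF ls'] measurable_compose[OF labelled_sample_meas[OF ls'] G]
    by (intro M_prod.product_nn_integral_insert[OF I]) (rule borel_measurable_times_ennreal)
  also have "\<dots> = (\<integral>\<^sup>+x. (\<Prod>n\<in>I. pair_density (x n, ls n)) *
              (\<integral>\<^sup>+y. ennreal (\<alpha> l * q l y) * G ((?r x)(i := (y, l))) \<partial>M) \<partial>PiM I (\<lambda>_. M))"
  proof (rule nn_integral_cong)
    fix x assume x: "x \<in> space (PiM I (\<lambda>_. M))"
    have "?r x \<in> space (PiM I (\<lambda>_. Q))"
      using measurable_space[OF labelled_sample_meas[OF ls] x] .
    from measurable_compose[OF labelled_meas[OF measurable_ident_sets[OF refl] l]
          measurable_component_update[OF this I(2)]]
    have "(\<lambda>y. (?r x)(i := (y, l))) \<in> measurable M (PiM (insert i I) (\<lambda>_. Q))"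
      by (simp add: comp_def)
    from measurable_compose[OF this G] l
    have "(\<lambda>y. ennreal (\<alpha> l * q l y) * G ((?r x)(i := (y, l)))) \<in> borel_measurable M"
      by measurable
    then show "(\<integral>\<^sup>+y. (\<Prod>n\<in>insert i I. pair_density ((x(i:=y)) n, (ls(i:=l)) n)) *
              G (\<lambda>n\<in>insert i I. ((x(i:=y)) n, (ls(i:=l)) n)) \<partial>M)
        = (\<Prod>n\<in>I. pair_density (x n, ls n)) * (\<integral>\<^sup>+y. ennreal (\<alpha> l * q l y) * G ((?r x)(i := (y, l))) \<partial>M)"
      unfolding factor by (rule nn_integral_cmult)
  qed
  finally show ?thesis .
qed

text \<open>Conditioning on the labels: given the label vector \<open>ls\<close>, which has probability
  \<open>\<Prod>n. \<alpha> (ls n)\<close>, the samples are independent with densities \<open>q (ls n)\<close>.\<close>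
lemma nn_integral_sample_by_labels:
  assumes "finite I" and "G \<in> borel_measurable (PiM I (\<lambda>_. Q))"
  shows "(\<integral>\<^sup>+\<omega>. G \<omega> \<partial>PiM I (\<lambda>_. Q)) =
    (\<Sum>ls\<in>labelings I. \<integral>\<^sup>+x. (\<Prod>n\<in>I. pair_density (x n, ls n)) * G (\<lambda>n\<in>I. (x n, ls n)) \<partial>PiM I (\<lambda>_. M))"
  using assms
proof (induction I arbitrary: G rule: finite_induct)
  case empty
  then show ?case by (simp add: PiM_empty nn_integral_count_space_finite)
next
  case (insert i I)
  note G[measurable] = insert.prems
  define H where "H l w = (\<integral>\<^sup>+x. ennreal (\<alpha> l * q l x) * G (w(i := (x, l))) \<partial>M)" for l w
  have H[measurable]: "H l \<in> borel_measurable (PiM I (\<lambda>_. Q))" if "l \<in> S" for l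
    unfolding H_def by (rule nn_integral_label_update_meas[OF that G])
  have "(\<integral>\<^sup>+w. G w \<partial>PiM (insert i I) (\<lambda>_. Q)) = (\<integral>\<^sup>+w. \<integral>\<^sup>+y. G (w(i := y)) \<partial>Q \<partial>PiM I (\<lambda>_. Q))"
    by (rule sample.product_nn_integral_insert) (use insert in auto)
  also have "\<dots> = (\<integral>\<^sup>+w. (\<Sum>l\<in>S. H l w) \<partial>PiM I (\<lambda>_. Q))"
  proof (rule nn_integral_cong)
    fix w assume w: "w \<in> space (PiM I (\<lambda>_. Q))"
    have "(\<lambda>y. G (w(i := y))) \<in> borel_measurable Q"
      using measurable_component_update[OF w insert(2)] by (rule measurable_compose) (rule G)
    then show "(\<integral>\<^sup>+y. G (w(i := y)) \<partial>Q) = (\<Sum>l\<in>S. H l w)"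
      unfolding H_def by (intro nn_integral_pair_law) (simp add: measurable_pair_law_domain)
  qed
  also have "\<dots> = (\<Sum>l\<in>S. \<integral>\<^sup>+w. H l w \<partial>PiM I (\<lambda>_. Q))"
    by (rule nn_integral_sum) (rule H)
  also have "\<dots> = (\<Sum>l\<in>S. \<Sum>ls\<in>labelings I.
      \<integral>\<^sup>+x. (\<Prod>n\<in>I. pair_density (x n, ls n)) * H l (\<lambda>n\<in>I. (x n, ls n)) \<partial>PiM I (\<lambda>_. M))"
    by (intro sum.cong refl insert.IH H)
  also have "\<dots> = (\<Sum>(l, ls)\<in>S \<times> labelings I.
      \<integral>\<^sup>+x. (\<Prod>n\<in>insert i I. pair_density (x n, (ls(i:=l)) n)) *
        G (\<lambda>n\<in>insert i I. (x n, (ls(i:=l)) n)) \<partial>PiM (insert i I) (\<lambda>_. M))"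
    unfolding sum.cartesian_product[symmetric] H_def
    by (intro sum.cong refl nn_integral_label_update[symmetric] insert.hyps G) auto
  also have "\<dots> = (\<Sum>ls\<in>labelings (insert i I).
      \<integral>\<^sup>+x. (\<Prod>n\<in>insert i I. pair_density (x n, ls n)) * G (\<lambda>n\<in>insert i I. (x n, ls n)) \<partial>PiM (insert i I) (\<lambda>_. M))"
    using insert(2)
    by (intro sum.reindex_bij_witness[of _ "\<lambda>ls. (ls i, ls(i := undefined))" "\<lambda>(l, ls). ls(i := l)"])
       (auto simp: PiE_def extensional_def)
  finally show ?case .
qed

lemma nn_integral_prod_given_labels:
  assumes I: "finite I" and ls: "ls \<in> labelings I"
    and e[measurable]: "\<And>n. n \<in> I \<Longrightarrow> e n \<in> borel_measurable M"
    and e_nonneg: "\<And>n y. n \<in> I \<Longrightarrow> y \<in> space M \<Longrightarrow> 0 \<le> e n y"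
    and e_int: "\<And>n. n \<in> I \<Longrightarrow> integrable M (\<lambda>y. q (ls n) y * e n y)"
  shows "(\<integral>\<^sup>+x. (\<Prod>n\<in>I. pair_density (x n, ls n)) * ennreal (\<Prod>n\<in>I. e n (x n)) \<partial>PiM I (\<lambda>_. M))
       = ennreal (label_prob I ls * (\<Prod>n\<in>I. \<integral>y. q (ls n) y * e n y \<partial>M))"
proof -
  have lsS: "n \<in> I \<Longrightarrow> ls n \<in> S" for n using ls by auto
  have "(\<integral>\<^sup>+x. (\<Prod>n\<in>I. pair_density (x n, ls n)) * ennreal (\<Prod>n\<in>I. e n (x n)) \<partial>PiM I (\<lambda>_. M))
      = (\<integral>\<^sup>+x. (\<Prod>n\<in>I. ennreal (\<alpha> (ls n) * q (ls n) (x n) * e n (x n))) \<partial>PiM I (\<lambda>_. M))"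
  proof (rule nn_integral_cong)
    fix x assume "x \<in> space (PiM I (\<lambda>_. M))"
    then have xn: "n \<in> I \<Longrightarrow> x n \<in> space M" for n by (auto simp: space_PiM)
    then have "ennreal (\<Prod>n\<in>I. e n (x n)) = (\<Prod>n\<in>I. ennreal (e n (x n)))"
      using e_nonneg by (intro prod_ennreal[symmetric]) auto
    then show "(\<Prod>n\<in>I. pair_density (x n, ls n)) * ennreal (\<Prod>n\<in>I. e n (x n))
        = (\<Prod>n\<in>I. ennreal (\<alpha> (ls n) * q (ls n) (x n) * e n (x n)))"
      using xn e_nonneg lsS \<alpha>_nonneg q_nonneg
      by (simp add: pair_density_def prod.distrib[symmetric] ennreal_mult' ennreal_mult'')
  qed
  also have "\<dots> = (\<Prod>n\<in>I. \<integral>\<^sup>+y. ennreal (\<alpha> (ls n) * q (ls n) y * e n y) \<partial>M)"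
    using lsS by (intro M_prod.product_nn_integral_prod[OF I]) measurable
  also have "\<dots> = (\<Prod>n\<in>I. ennreal (\<alpha> (ls n) * (\<integral>y. q (ls n) y * e n y \<partial>M)))"
  proof (rule prod.cong[OF refl])
    fix n assume n: "n \<in> I"
    have "(\<integral>\<^sup>+y. ennreal (\<alpha> (ls n) * q (ls n) y * e n y) \<partial>M) = ennreal (\<integral>y. \<alpha> (ls n) * q (ls n) y * e n y \<partial>M)"
      using e_int[OF n] n lsS \<alpha>_nonneg q_nonneg e_nonneg
      by (intro nn_integral_eq_integral AE_I2) (auto simp: mult.assoc)
    then show "(\<integral>\<^sup>+y. ennreal (\<alpha> (ls n) * q (ls n) y * e n y) \<partial>M) = ennreal (\<alpha> (ls n) * (\<integral>y. q (ls n) y * e n y \<partial>M))"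
      by (simp add: mult.assoc)
  qed
  also have "\<dots> = ennreal (\<Prod>n\<in>I. \<alpha> (ls n) * (\<integral>y. q (ls n) y * e n y \<partial>M))"
    using lsS \<alpha>_nonneg q_nonneg e_nonneg
    by (intro prod_ennreal mult_nonneg_nonneg integral_nonneg_AE AE_I2) auto
  finally show ?thesis by (simp add: label_prob_def prod.distrib)
qed

lemma nn_integral_pair_given_labels:
  assumes I: "finite I" and ls: "ls \<in> labelings I" and n: "n \<in> I" and n': "n' \<in> I"
    and u[measurable]: "u \<in> borel_measurable M" and v[measurable]: "v \<in> borel_measurable M"
    and u_nonneg: "\<And>y. y \<in> space M \<Longrightarrow> 0 \<le> u y" and v_nonneg: "\<And>y. y \<in> space M \<Longrightarrow> 0 \<le> v y"
    and u_int: "\<And>s. s \<in> S \<Longrightarrow> integrable M (\<lambda>y. q s y * u y)"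
    and v_int: "\<And>s. s \<in> S \<Longrightarrow> integrable M (\<lambda>y. q s y * v y)"
    and uv_int: "\<And>s. s \<in> S \<Longrightarrow> integrable M (\<lambda>y. q s y * (u y * v y))"
  shows "(\<integral>\<^sup>+x. (\<Prod>j\<in>I. pair_density (x j, ls j)) * ennreal (u (x n) * v (x n')) \<partial>PiM I (\<lambda>_. M))
       = ennreal (label_prob I ls * (if n = n' then \<integral>y. q (ls n) y * (u y * v y) \<partial>M
                  else (\<integral>y. q (ls n) y * u y \<partial>M) * (\<integral>y. q (ls n') y * v y \<partial>M)))"
proof -
  define e where "e j y = (if j = n then u y else 1) * (if j = n' then v y else 1)" for j y
  have lsS: "j \<in> I \<Longrightarrow> ls j \<in> S" for j using ls by auto
  have prod_e: "(\<Prod>j\<in>I. e j (x j)) = u (x n) * v (x n')" for x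
    using I n n' by (simp add: e_def prod.distrib prod.delta)
  have "(\<integral>\<^sup>+x. (\<Prod>j\<in>I. pair_density (x j, ls j)) * ennreal (u (x n) * v (x n')) \<partial>PiM I (\<lambda>_. M))
      = (\<integral>\<^sup>+x. (\<Prod>j\<in>I. pair_density (x j, ls j)) * ennreal (\<Prod>j\<in>I. e j (x j)) \<partial>PiM I (\<lambda>_. M))"
    by (simp only: prod_e)
  also have "\<dots> = ennreal (label_prob I ls * (\<Prod>j\<in>I. \<integral>y. q (ls j) y * e j y \<partial>M))"
  proof (rule nn_integral_prod_given_labels[OF I ls])
    fix j assume j: "j \<in> I"
    show "e j \<in> borel_measurable M" unfolding e_def by measurable
    show "integrable M (\<lambda>y. q (ls j) y * e j y)"
      using u_int[OF lsS[OF j]] v_int[OF lsS[OF j]] uv_int[OF lsS[OF j]] q_int[OF lsS[OF j]]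
      by (cases "j = n"; cases "j = n'") (simp_all add: e_def)
  qed (use u_nonneg v_nonneg in \<open>simp add: e_def\<close>)
  also have "(\<Prod>j\<in>I. \<integral>y. q (ls j) y * e j y \<partial>M) = (\<Prod>j\<in>{n, n'}. \<integral>y. q (ls j) y * e j y \<partial>M)"
    using I n n' lsS q_integral by (intro prod.mono_neutral_right) (auto simp: e_def)
  also have "\<dots> = (if n = n' then \<integral>y. q (ls n) y * (u y * v y) \<partial>M
                  else (\<integral>y. q (ls n) y * u y \<partial>M) * (\<integral>y. q (ls n') y * v y \<partial>M))"
    by (cases "n = n'") (auto simp: e_def)
  finally show ?thesis .
qed

lemma label_average_prod:
  assumes "finite I"
  shows "(\<Sum>ls\<in>labelings I. label_prob I ls * (\<Prod>n\<in>I. F n (ls n))) = (\<Prod>n\<in>I. \<Sum>s\<in>S. \<alpha> s * F n s)"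
  using prod_sum_PiE[OF assms, of "\<lambda>_. S" "\<lambda>n s. \<alpha> s * F n s"]
  by (simp add: label_prob_def prod.distrib)

lemma label_prob_sum: "finite I \<Longrightarrow> (\<Sum>ls\<in>labelings I. label_prob I ls) = 1"
  using label_average_prod[of I "\<lambda>_ _. 1"] \<alpha>_sum by simp

lemma label_average:
  assumes I: "finite I" and m: "m \<in> I"
  shows "(\<Sum>ls\<in>labelings I. label_prob I ls * g (ls m)) = (\<Sum>s\<in>S. \<alpha> s * g s)"
proof -
  have "(\<Sum>ls\<in>labelings I. label_prob I ls * g (ls m))
      = (\<Sum>ls\<in>labelings I. label_prob I ls * (\<Prod>n\<in>I. if n = m then g (ls n) else 1))"
    using I m by (intro sum.cong refl) (simp add: prod.delta)
  also have "\<dots> = (\<Prod>n\<in>I. \<Sum>s\<in>S. \<alpha> s * (if n = m then g s else 1))"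
    by (rule label_average_prod[OF I])
  also have "\<dots> = (\<Prod>n\<in>I. if n = m then (\<Sum>s\<in>S. \<alpha> s * g s) else 1)"
    using \<alpha>_sum by (intro prod.cong refl) auto
  finally show ?thesis using I m by (simp add: prod.delta)
qed

lemma label_average_pair:
  assumes I: "finite I" and m: "m \<in> I" and m': "m' \<in> I"
  shows "(\<Sum>ls\<in>labelings I. label_prob I ls * (if m = m' then b (ls m) else c (ls m) * c (ls m')))
       = (if m = m' then (\<Sum>s\<in>S. \<alpha> s * b s) else (\<Sum>s\<in>S. \<alpha> s * c s)\<^sup>2)"
proof (cases "m = m'")
  case True
  then show ?thesis using label_average[OF I m] by simp
next
  case False
  have "(\<Sum>ls\<in>labelings I. label_prob I ls * (c (ls m) * c (ls m')))
      = (\<Sum>ls\<in>labelings I. label_prob I ls *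
           (\<Prod>n\<in>I. (if n = m then c (ls n) else 1) * (if n = m' then c (ls n) else 1)))"
    using I m m' by (intro sum.cong refl) (simp add: prod.delta prod.distrib)
  also have "\<dots> = (\<Prod>n\<in>I. \<Sum>s\<in>S. \<alpha> s * ((if n = m then c s else 1) * (if n = m' then c s else 1)))"
    by (rule label_average_prod[OF I])
  also have "\<dots> = (\<Prod>n\<in>I. (if n = m then (\<Sum>s\<in>S. \<alpha> s * c s) else 1) *
                           (if n = m' then (\<Sum>s\<in>S. \<alpha> s * c s) else 1))"
    using \<alpha>_sum False by (intro prod.cong refl) auto
  finally show ?thesis
    using I m m' False by (simp add: prod.delta prod.distrib power2_eq_square)
qed

lemma label_average_sum:
  assumes "finite I"
  shows "(\<Sum>ls\<in>labelings I. label_prob I ls * (\<Sum>m\<in>I. g (ls m))) = real (card I) * (\<Sum>s\<in>S. \<alpha> s * g s)"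
proof -
  have "(\<Sum>ls\<in>labelings I. label_prob I ls * (\<Sum>m\<in>I. g (ls m)))
      = (\<Sum>m\<in>I. \<Sum>ls\<in>labelings I. label_prob I ls * g (ls m))"
    by (simp add: sum_distrib_left sum.swap[of _ I])
  also have "\<dots> = (\<Sum>m\<in>I. \<Sum>s\<in>S. \<alpha> s * g s)"
    using assms by (intro sum.cong refl label_average)
  finally show ?thesis by simp
qed

lemma label_average_pair_sum:
  assumes I: "finite I"
  shows "(\<Sum>ls\<in>labelings I. label_prob I ls *
            (\<Sum>n\<in>I. \<Sum>n'\<in>I. if n = n' then b (ls n) else c (ls n) * c (ls n')))
       = real (card I) * (\<Sum>s\<in>S. \<alpha> s * b s) + ((real (card I))\<^sup>2 - real (card I)) * (\<Sum>s\<in>S. \<alpha> s * c s)\<^sup>2"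
proof -
  define B where "B = (\<Sum>s\<in>S. \<alpha> s * b s)"
  define C where "C = (\<Sum>s\<in>S. \<alpha> s * c s)"
  have "(\<Sum>ls\<in>labelings I. label_prob I ls *
            (\<Sum>n\<in>I. \<Sum>n'\<in>I. if n = n' then b (ls n) else c (ls n) * c (ls n')))
      = (\<Sum>n\<in>I. \<Sum>n'\<in>I. \<Sum>ls\<in>labelings I.
            label_prob I ls * (if n = n' then b (ls n) else c (ls n) * c (ls n')))"
    unfolding sum_distrib_left by (subst sum.swap, rule sum.cong[OF refl], rule sum.swap)
  also have "\<dots> = (\<Sum>n\<in>I. \<Sum>n'\<in>I. if n = n' then B else C * C)"
    using label_average_pair[OF I, of _ _ b c] by (simp add: B_def C_def power2_eq_square cong: if_cong)
  also have "\<dots> = real (card I) * B + ((real (card I))\<^sup>2 - real (card I)) * C\<^sup>2"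
    using sum_square_replace_diagonal[OF I, of "\<lambda>_. B" "\<lambda>_. C"] by (simp add: algebra_simps)
  finally show ?thesis unfolding B_def C_def .
qed

lemma label_average_sum_sq_centered:
  assumes I: "finite I" and centered: "(\<Sum>s\<in>S. \<alpha> s * e s) = 0"
  shows "(\<Sum>ls\<in>labelings I. label_prob I ls * (\<Sum>m\<in>I. e (ls m))\<^sup>2)
       = real (card I) * (\<Sum>s\<in>S. \<alpha> s * (e s)\<^sup>2)"
proof -
  have "(\<Sum>m\<in>I. e (ls m))\<^sup>2 = (\<Sum>m\<in>I. \<Sum>m'\<in>I. if m = m' then (e (ls m))\<^sup>2 else e (ls m) * e (ls m'))"
    for ls :: "nat \<Rightarrow> nat"
    unfolding power2_eq_square sum_product by (intro sum.cong refl) auto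
  then show ?thesis
    using label_average_pair_sum[OF I, of "\<lambda>s. (e s)\<^sup>2" e] centered by simp
qed

lemma pair_integrand_meas:
  assumes ls: "ls \<in> labelings I" and n: "n \<in> I" and n': "n' \<in> I"
    and [measurable]: "u \<in> borel_measurable M" "v \<in> borel_measurable M"
  shows "(\<lambda>x. (\<Prod>j\<in>I. pair_density (x j, ls j)) * ennreal (u (x n) * v (x n')))
           \<in> borel_measurable (PiM I (\<lambda>_. M))"
  using n n' by (intro borel_measurable_times_ennreal prod_pair_density_meas[OF ls]) measurable

lemma nn_integral_sum_given_labels:
  assumes I: "finite I" and ls: "ls \<in> labelings I"
    and u[measurable]: "u \<in> borel_measurable M" and u_nonneg: "\<And>y. y \<in> space M \<Longrightarrow> 0 \<le> u y"
    and u_int: "\<And>s. s \<in> S \<Longrightarrow> integrable M (\<lambda>y. q s y * u y)"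
  shows "(\<integral>\<^sup>+x. (\<Prod>n\<in>I. pair_density (x n, ls n)) * ennreal (\<Sum>n\<in>I. u (x n)) \<partial>PiM I (\<lambda>_. M))
       = ennreal (label_prob I ls * (\<Sum>n\<in>I. \<integral>y. q (ls n) y * u y \<partial>M))"
proof -
  have "(\<integral>\<^sup>+x. (\<Prod>n\<in>I. pair_density (x n, ls n)) * ennreal (\<Sum>n\<in>I. u (x n)) \<partial>PiM I (\<lambda>_. M))
      = (\<integral>\<^sup>+x. (\<Sum>n\<in>I. (\<Prod>j\<in>I. pair_density (x j, ls j)) * ennreal (u (x n) * 1)) \<partial>PiM I (\<lambda>_. M))"
  proof (rule nn_integral_cong)
    fix x assume "x \<in> space (PiM I (\<lambda>_. M))"
    then have "ennreal (\<Sum>n\<in>I. u (x n)) = (\<Sum>n\<in>I. ennreal (u (x n)))"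
      using u_nonneg by (intro sum_ennreal[symmetric]) (auto simp: space_PiM)
    then show "(\<Prod>n\<in>I. pair_density (x n, ls n)) * ennreal (\<Sum>n\<in>I. u (x n))
        = (\<Sum>n\<in>I. (\<Prod>j\<in>I. pair_density (x j, ls j)) * ennreal (u (x n) * 1))"
      by (simp add: sum_distrib_left)
  qed
  also have "\<dots> = (\<Sum>n\<in>I. \<integral>\<^sup>+x. (\<Prod>j\<in>I. pair_density (x j, ls j)) * ennreal (u (x n) * 1) \<partial>PiM I (\<lambda>_. M))"
    by (intro nn_integral_sum pair_integrand_meas[OF ls]) auto
  also have "\<dots> = (\<Sum>n\<in>I. ennreal (label_prob I ls * (\<integral>y. q (ls n) y * u y \<partial>M)))"
  proof (rule sum.cong[OF refl])
    fix n assume n: "n \<in> I"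
    have "(\<integral>\<^sup>+x. (\<Prod>j\<in>I. pair_density (x j, ls j)) * ennreal (u (x n) * 1) \<partial>PiM I (\<lambda>_. M))
        = ennreal (label_prob I ls * (if n = n then \<integral>y. q (ls n) y * (u y * 1) \<partial>M
            else (\<integral>y. q (ls n) y * u y \<partial>M) * (\<integral>y. q (ls n) y * 1 \<partial>M)))"
      by (rule nn_integral_pair_given_labels[OF I ls n n u]) (simp_all add: u_nonneg u_int q_int)
    then show "(\<integral>\<^sup>+x. (\<Prod>j\<in>I. pair_density (x j, ls j)) * ennreal (u (x n) * 1) \<partial>PiM I (\<lambda>_. M))
        = ennreal (label_prob I ls * (\<integral>y. q (ls n) y * u y \<partial>M))"
      by simp
  qed
  also have "\<dots> = ennreal (label_prob I ls * (\<Sum>n\<in>I. \<integral>y. q (ls n) y * u y \<partial>M))"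
    using label_prob_nonneg[OF ls] PiE_mem[OF ls] u_nonneg q_nonneg
    by (auto simp: sum_distrib_left intro!: sum_ennreal mult_nonneg_nonneg integral_nonneg_AE AE_I2)
  finally show ?thesis .
qed

lemma nn_integral_sum_sq_given_labels:
  assumes I: "finite I" and ls: "ls \<in> labelings I"
    and u[measurable]: "u \<in> borel_measurable M" and u_nonneg: "\<And>y. y \<in> space M \<Longrightarrow> 0 \<le> u y"
    and u_int: "\<And>s. s \<in> S \<Longrightarrow> integrable M (\<lambda>y. q s y * u y)"
    and u2_int: "\<And>s. s \<in> S \<Longrightarrow> integrable M (\<lambda>y. q s y * (u y)\<^sup>2)"
  shows "(\<integral>\<^sup>+x. (\<Prod>n\<in>I. pair_density (x n, ls n)) * ennreal ((\<Sum>n\<in>I. u (x n))\<^sup>2) \<partial>PiM I (\<lambda>_. M))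
       = ennreal (label_prob I ls * (\<Sum>n\<in>I. \<Sum>n'\<in>I. if n = n' then \<integral>y. q (ls n) y * (u y)\<^sup>2 \<partial>M
             else (\<integral>y. q (ls n) y * u y \<partial>M) * (\<integral>y. q (ls n') y * u y \<partial>M)))"
proof -
  define T where "T n n' = (if n = n' then \<integral>y. q (ls n) y * (u y)\<^sup>2 \<partial>M
             else (\<integral>y. q (ls n) y * u y \<partial>M) * (\<integral>y. q (ls n') y * u y \<partial>M))" for n n'
  have T_nonneg: "0 \<le> label_prob I ls * T n n'" if "n \<in> I" "n' \<in> I" for n n'
    using that PiE_mem[OF ls] label_prob_nonneg[OF ls] q_nonneg u_nonneg unfolding T_def
    by (auto intro!: mult_nonneg_nonneg integral_nonneg_AE AE_I2)
  have "(\<integral>\<^sup>+x. (\<Prod>n\<in>I. pair_density (x n, ls n)) * ennreal ((\<Sum>n\<in>I. u (x n))\<^sup>2) \<partial>PiM I (\<lambda>_. M))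
      = (\<integral>\<^sup>+x. (\<Sum>n\<in>I. \<Sum>n'\<in>I. (\<Prod>j\<in>I. pair_density (x j, ls j)) * ennreal (u (x n) * u (x n'))) \<partial>PiM I (\<lambda>_. M))"
  proof (rule nn_integral_cong)
    fix x assume "x \<in> space (PiM I (\<lambda>_. M))"
    then have xn: "n \<in> I \<Longrightarrow> 0 \<le> u (x n)" for n
      using u_nonneg by (auto simp: space_PiM)
    have "ennreal ((\<Sum>n\<in>I. u (x n))\<^sup>2) = ennreal (\<Sum>n\<in>I. \<Sum>n'\<in>I. u (x n) * u (x n'))"
      by (simp add: power2_eq_square sum_product)
    also have "\<dots> = (\<Sum>n\<in>I. ennreal (\<Sum>n'\<in>I. u (x n) * u (x n')))"
      by (rule sum_ennreal[symmetric]) (use xn in \<open>auto intro!: sum_nonneg\<close>)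
    also have "\<dots> = (\<Sum>n\<in>I. \<Sum>n'\<in>I. ennreal (u (x n) * u (x n')))"
      by (intro sum.cong refl sum_ennreal[symmetric]) (use xn in auto)
    finally show "(\<Prod>n\<in>I. pair_density (x n, ls n)) * ennreal ((\<Sum>n\<in>I. u (x n))\<^sup>2)
        = (\<Sum>n\<in>I. \<Sum>n'\<in>I. (\<Prod>j\<in>I. pair_density (x j, ls j)) * ennreal (u (x n) * u (x n')))"
      by (simp add: sum_distrib_left)
  qed
  also have "\<dots> = (\<Sum>n\<in>I. \<Sum>n'\<in>I. \<integral>\<^sup>+x. (\<Prod>j\<in>I. pair_density (x j, ls j)) * ennreal (u (x n) * u (x n')) \<partial>PiM I (\<lambda>_. M))"
    by (simp add: nn_integral_sum pair_integrand_meas[OF ls] borel_measurable_sum)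
  also have "\<dots> = (\<Sum>n\<in>I. \<Sum>n'\<in>I. ennreal (label_prob I ls * T n n'))"
    unfolding T_def power2_eq_square using u_int u2_int
    by (intro sum.cong refl nn_integral_pair_given_labels[OF I ls]) (auto simp: u_nonneg power2_eq_square)
  also have "\<dots> = ennreal (label_prob I ls * (\<Sum>n\<in>I. \<Sum>n'\<in>I. T n n'))"
    using T_nonneg by (simp add: sum_ennreal sum_nonneg sum_distrib_left)
  finally show ?thesis by (simp only: T_def)
qed

lemma nn_integral_sample_eq_label_average:
  assumes I: "finite I" and G: "G \<in> borel_measurable (PiM I (\<lambda>_. Q))"
    and given_labels: "\<And>ls. ls \<in> labelings I \<Longrightarrow>
      (\<integral>\<^sup>+x. (\<Prod>n\<in>I. pair_density (x n, ls n)) * G (\<lambda>n\<in>I. (x n, ls n)) \<partial>PiM I (\<lambda>_. M))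
        = ennreal (label_prob I ls * g ls)"
    and g_nonneg: "\<And>ls. ls \<in> labelings I \<Longrightarrow> 0 \<le> g ls"
  shows "(\<integral>\<^sup>+\<omega>. G \<omega> \<partial>PiM I (\<lambda>_. Q)) = ennreal (\<Sum>ls\<in>labelings I. label_prob I ls * g ls)"
  using label_prob_nonneg g_nonneg
  by (simp add: nn_integral_sample_by_labels[OF I G] given_labels sum_ennreal)

definition bh_denom :: "nat set \<Rightarrow> (nat \<Rightarrow> nat) \<Rightarrow> 'a \<Rightarrow> real" where
  "bh_denom I ls y = (\<Sum>m\<in>I. q (ls m) y)"

definition mixture :: "'a \<Rightarrow> real" where
  "mixture y = (\<Sum>k\<in>S. \<alpha> k * q k y)"

lemma mixture_meas[measurable]: "mixture \<in> borel_measurable M"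
  unfolding mixture_def[abs_def] by measurable

lemma bh_denom_meas[measurable]: "ls \<in> labelings I \<Longrightarrow> bh_denom I ls \<in> borel_measurable M"
  unfolding bh_denom_def[abs_def] by (intro borel_measurable_sum q_meas) auto

lemma mixture_lower: "y \<in> space M \<Longrightarrow> Cm \<le> mixture y"
  and mixture_upper: "y \<in> space M \<Longrightarrow> mixture y \<le> Cp"
proof -
  assume y: "y \<in> space M"
  have "(\<Sum>k\<in>S. \<alpha> k * Cm) \<le> mixture y" "mixture y \<le> (\<Sum>k\<in>S. \<alpha> k * Cp)"
    unfolding mixture_def using y \<alpha>_nonneg q_lower q_upper by (intro sum_mono mult_left_mono; simp)+
  then show "Cm \<le> mixture y" "mixture y \<le> Cp"
    using \<alpha>_sum by (simp_all add: sum_distrib_right[symmetric])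
qed

lemma bh_denom_lower:
  assumes "ls \<in> labelings I" "y \<in> space M"
  shows "real (card I) * Cm \<le> bh_denom I ls y"
proof -
  have "(\<Sum>m\<in>I. Cm) \<le> bh_denom I ls y"
    unfolding bh_denom_def using assms by (intro sum_mono q_lower) auto
  then show ?thesis by simp
qed

lemma ratio_nonneg: "y \<in> space M \<Longrightarrow> Cm \<le> c \<Longrightarrow> 0 \<le> pt y / c"
  using pt_nonneg Cm_pos by simp

lemma ratio_sq_integrable:
  assumes pt2: "integrable M (\<lambda>y. (pt y)\<^sup>2)" and [measurable]: "d \<in> borel_measurable M"
    and d: "\<And>y. y \<in> space M \<Longrightarrow> Cm \<le> d y"
  shows "integrable M (\<lambda>y. (pt y)\<^sup>2 / d y)"
proof (rule Bochner_Integration.integrable_bound[OF integrable_divide[OF pt2, of Cm]])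
  show "AE y in M. norm ((pt y)\<^sup>2 / d y) \<le> norm ((pt y)\<^sup>2 / Cm)"
  proof (rule AE_I2)
    fix y assume y: "y \<in> space M"
    then have "0 < d y" using d[OF y] Cm_pos by linarith
    then show "norm ((pt y)\<^sup>2 / d y) \<le> norm ((pt y)\<^sup>2 / Cm)"
      using d[OF y] Cm_pos by (simp add: divide_left_mono)
  qed
qed simp

lemma weighted_ratio_integrable:
  assumes [measurable]: "d \<in> borel_measurable M" and d: "\<And>y. y \<in> space M \<Longrightarrow> Cm \<le> d y"
    and s: "s \<in> S"
  shows "integrable M (\<lambda>y. q s y * (pt y / d y))"
proof (rule Bochner_Integration.integrable_bound[OF integrable_mult_right[OF pt_int, of "Cp / Cm"]])
  show "AE y in M. norm (q s y * (pt y / d y)) \<le> norm (Cp / Cm * pt y)"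
  proof (rule AE_I2)
    fix y assume y: "y \<in> space M"
    have "q s y * (pt y / d y) \<le> Cp * (pt y / Cm)"
      using s y d[OF y] Cm_pos Cp_pos pt_nonneg q_nonneg q_upper
      by (intro mult_mono divide_left_mono) (auto intro: ratio_nonneg)
    moreover have "0 < d y" using d[OF y] Cm_pos by linarith
    ultimately show "norm (q s y * (pt y / d y)) \<le> norm (Cp / Cm * pt y)"
      using s y q_nonneg pt_nonneg Cp_pos Cm_pos by simp
  qed
qed (use s in simp)

lemma weighted_ratio_sq_integrable:
  assumes pt2: "integrable M (\<lambda>y. (pt y)\<^sup>2)" and [measurable]: "d \<in> borel_measurable M"
    and d: "\<And>y. y \<in> space M \<Longrightarrow> Cm \<le> d y" and s: "s \<in> S"
  shows "integrable M (\<lambda>y. q s y * (pt y / d y)\<^sup>2)"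
proof (rule Bochner_Integration.integrable_bound[OF integrable_mult_right[OF pt2, of "Cp / Cm\<^sup>2"]])
  show "AE y in M. norm (q s y * (pt y / d y)\<^sup>2) \<le> norm (Cp / Cm\<^sup>2 * (pt y)\<^sup>2)"
  proof (rule AE_I2)
    fix y assume y: "y \<in> space M"
    have "(pt y / d y)\<^sup>2 \<le> (pt y / Cm)\<^sup>2"
      using y d[OF y] Cm_pos pt_nonneg by (intro power_mono divide_left_mono) (auto intro: ratio_nonneg)
    then have "q s y * (pt y / d y)\<^sup>2 \<le> Cp * (pt y / Cm)\<^sup>2"
      using s y q_nonneg q_upper Cp_pos by (intro mult_mono) auto
    then show "norm (q s y * (pt y / d y)\<^sup>2) \<le> norm (Cp / Cm\<^sup>2 * (pt y)\<^sup>2)"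
      using s y q_nonneg Cp_pos by (simp add: power_divide)
  qed
qed (use s in simp)

lemma sum_integral_bh_denom:
  assumes "finite I" "ls \<in> labelings I" and h: "\<And>s. s \<in> S \<Longrightarrow> integrable M (\<lambda>y. q s y * h y)"
  shows "(\<Sum>n\<in>I. \<integral>y. q (ls n) y * h y \<partial>M) = (\<integral>y. bh_denom I ls y * h y \<partial>M)"
  using assms PiE_mem[OF assms(2)]
  by (subst Bochner_Integration.integral_sum[symmetric]) (auto simp: bh_denom_def sum_distrib_right)

lemma sum_integral_mixture:
  assumes h: "\<And>s. s \<in> S \<Longrightarrow> integrable M (\<lambda>y. q s y * h y)"
  shows "(\<Sum>s\<in>S. \<alpha> s * (\<integral>y. q s y * h y \<partial>M)) = (\<integral>y. mixture y * h y \<partial>M)"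
proof -
  have "(\<Sum>s\<in>S. \<alpha> s * (\<integral>y. q s y * h y \<partial>M)) = (\<Sum>s\<in>S. \<integral>y. \<alpha> s * (q s y * h y) \<partial>M)"
    by simp
  also have "\<dots> = (\<integral>y. (\<Sum>s\<in>S. \<alpha> s * (q s y * h y)) \<partial>M)"
    using h by (intro Bochner_Integration.integral_sum[symmetric]) auto
  finally show ?thesis by (simp add: mixture_def sum_distrib_right mult.assoc)
qed

lemma label_average_bh_denom_deviation:
  assumes I: "finite I" and y: "y \<in> space M"
  shows "(\<Sum>ls\<in>labelings I. label_prob I ls * (bh_denom I ls y - real (card I) * mixture y)) = 0"
    and "(\<Sum>ls\<in>labelings I. label_prob I ls * (bh_denom I ls y - real (card I) * mixture y)\<^sup>2)
           \<le> real (card I) * Cp\<^sup>2"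
proof -
  define e where "e s = q s y - mixture y" for s
  have dev: "bh_denom I ls y - real (card I) * mixture y = (\<Sum>m\<in>I. e (ls m))" for ls
    by (simp add: bh_denom_def e_def sum_subtractf)
  have centered: "(\<Sum>s\<in>S. \<alpha> s * e s) = 0"
    using \<alpha>_sum by (simp add: e_def algebra_simps sum_subtractf sum_distrib_right[symmetric] mixture_def)
  show "(\<Sum>ls\<in>labelings I. label_prob I ls * (bh_denom I ls y - real (card I) * mixture y)) = 0"
    unfolding dev label_average_sum[OF I] centered by simp
  have "(\<Sum>s\<in>S. \<alpha> s * (e s)\<^sup>2) \<le> (\<Sum>s\<in>S. \<alpha> s * Cp\<^sup>2)"
  proof (intro sum_mono mult_left_mono)
    fix s assume s: "s \<in> S"
    have "\<bar>e s\<bar> \<le> Cp"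
      using q_lower[OF s y] q_upper[OF s y] mixture_lower[OF y] mixture_upper[OF y] Cm_pos
      unfolding e_def by linarith
    then show "(e s)\<^sup>2 \<le> Cp\<^sup>2" using abs_le_square_iff[of "e s" Cp] Cp_pos by simp
  qed (use \<alpha>_nonneg in auto)
  then show "(\<Sum>ls\<in>labelings I. label_prob I ls * (bh_denom I ls y - real (card I) * mixture y)\<^sup>2)
           \<le> real (card I) * Cp\<^sup>2"
    unfolding dev label_average_sum_sq_centered[OF I centered]
    using \<alpha>_sum by (simp add: sum_distrib_right[symmetric] mult_left_mono)
qed

text \<open>The key estimate: the first-order term of the expansion of \<open>1 / D\<close> around the mean
  denominator \<open>N * mixture y\<close> averages out, leaving an error of order \<open>1 / N\<^sup>2\<close>.\<close>
lemma label_average_inverse_bh_denom_le: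
  assumes I: "finite I" "I \<noteq> {}" and y: "y \<in> space M"
  shows "(\<Sum>ls\<in>labelings I. label_prob I ls / bh_denom I ls y)
           \<le> 1 / (real (card I) * mixture y) + Cp\<^sup>2 / (Cm^3 * (real (card I))\<^sup>2)"
proof -
  define N where "N = real (card I)"
  define \<mu> where "\<mu> = N * mixture y"
  have "0 < card I" using I by (simp add: card_gt_0_iff)
  then have N: "1 \<le> N" by (simp add: N_def)
  have NCm: "0 < N * Cm" using N Cm_pos by simp
  have \<mu>: "N * Cm \<le> \<mu>" using mixture_lower[OF y] N by (simp add: \<mu>_def)
  have dev0: "(\<Sum>ls\<in>labelings I. label_prob I ls * (bh_denom I ls y - \<mu>)) = 0"
    and dev2: "(\<Sum>ls\<in>labelings I. label_prob I ls * (bh_denom I ls y - \<mu>)\<^sup>2) \<le> N * Cp\<^sup>2"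
    using label_average_bh_denom_deviation[OF I(1) y] unfolding \<mu>_def N_def by auto
  have "(\<Sum>ls\<in>labelings I. label_prob I ls / bh_denom I ls y)
      \<le> (\<Sum>ls\<in>labelings I. label_prob I ls * (1 / \<mu> - (bh_denom I ls y - \<mu>) / \<mu>\<^sup>2
                                                 + (bh_denom I ls y - \<mu>)\<^sup>2 / (\<mu>\<^sup>2 * (N * Cm))))"
    unfolding divide_inverse[of "label_prob I _"] inverse_eq_divide
    using \<mu> NCm bh_denom_lower[OF _ y] label_prob_nonneg
    by (intro sum_mono mult_left_mono inverse_le_second_order) (auto simp: N_def)
  also have "\<dots> = (\<Sum>ls\<in>labelings I. label_prob I ls) / \<mu>
       - (\<Sum>ls\<in>labelings I. label_prob I ls * (bh_denom I ls y - \<mu>)) / \<mu>\<^sup>2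
       + (\<Sum>ls\<in>labelings I. label_prob I ls * (bh_denom I ls y - \<mu>)\<^sup>2) / (\<mu>\<^sup>2 * (N * Cm))"
  proof -
    have "w * (1 / \<mu> - a / \<mu>\<^sup>2 + b / c) = w / \<mu> - w * a / \<mu>\<^sup>2 + w * b / c" for w a b c :: real
      by (simp add: algebra_simps)
    then show ?thesis by (simp only: sum.distrib sum_subtractf sum_divide_distrib)
  qed
  also have "\<dots> \<le> 1 / \<mu> + N * Cp\<^sup>2 / (\<mu>\<^sup>2 * (N * Cm))"
  proof -
    have "(\<Sum>ls\<in>labelings I. label_prob I ls * (bh_denom I ls y - \<mu>)\<^sup>2) / (\<mu>\<^sup>2 * (N * Cm))
        \<le> N * Cp\<^sup>2 / (\<mu>\<^sup>2 * (N * Cm))"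
      using dev2 NCm by (intro divide_right_mono) auto
    then show ?thesis using dev0 label_prob_sum[OF I(1)] by simp
  qed
  also have "N * Cp\<^sup>2 / (\<mu>\<^sup>2 * (N * Cm)) \<le> Cp\<^sup>2 / ((N * Cm)\<^sup>2 * Cm)"
  proof -
    have "N * Cp\<^sup>2 / (\<mu>\<^sup>2 * (N * Cm)) = Cp\<^sup>2 / (\<mu>\<^sup>2 * Cm)" using N by simp
    also have "\<dots> \<le> Cp\<^sup>2 / ((N * Cm)\<^sup>2 * Cm)"
      using \<mu> NCm Cm_pos by (intro divide_left_mono mult_right_mono power_mono mult_pos_pos) auto
    finally show ?thesis .
  qed
  finally show ?thesis
    by (simp add: \<mu>_def N_def power2_eq_square power3_eq_cube mult_ac)
qed

lemma Z_BH_labelled: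
  "Z_BH pt q N (\<lambda>n\<in>{1..N}. (x n, ls n)) = (\<Sum>n\<in>{1..N}. pt (x n) / bh_denom {1..N} ls (x n))"
  unfolding Z_BH_def bh_denom_def by (intro sum.cong refl) auto

lemma Z_RB_labelled:
  "Z_RB pt q \<alpha> K N (\<lambda>n\<in>{1..N}. (x n, ls n)) = (\<Sum>n\<in>{1..N}. pt (x n) / (real N * mixture (x n)))"
  unfolding Z_RB_def mixture_def by (simp add: sum_divide_distrib ac_simps)

lemma Z_BH_nonneg:
  assumes "\<omega> \<in> space (PiM {1..N} (\<lambda>_. Q))"
  shows "0 \<le> Z_BH pt q N \<omega>"
  unfolding Z_BH_def using space_sample[OF assms] pt_nonneg q_nonneg
  by (intro sum_nonneg divide_nonneg_nonneg; blast)

lemma Z_RB_nonneg: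
  assumes "\<omega> \<in> space (PiM {1..N} (\<lambda>_. Q))"
  shows "0 \<le> Z_RB pt q \<alpha> K N \<omega>"
  unfolding Z_RB_def using space_sample[OF assms] pt_nonneg q_nonneg \<alpha>_nonneg
  by (intro mult_nonneg_nonneg sum_nonneg divide_nonneg_nonneg; simp; blast)

lemma sample_fst_meas: "n \<in> I \<Longrightarrow> (\<lambda>\<omega>. fst (\<omega> n)) \<in> measurable (PiM I (\<lambda>_. Q)) M"
  by (rule measurable_compose[OF measurable_component_singleton])
     (simp_all add: measurable_pair_law_domain)

lemma sample_snd_meas: "n \<in> I \<Longrightarrow> (\<lambda>\<omega>. snd (\<omega> n)) \<in> measurable (PiM I (\<lambda>_. Q)) (count_space S)"
  by (rule measurable_compose[OF measurable_component_singleton])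
     (simp_all add: measurable_pair_law_domain)

lemma Z_BH_meas: "Z_BH pt q N \<in> borel_measurable (PiM {1..N} (\<lambda>_. Q))"
proof -
  have "(\<lambda>\<omega>. q (snd (\<omega> m)) (fst (\<omega> n))) \<in> borel_measurable (PiM {1..N} (\<lambda>_. Q))"
    if "n \<in> {1..N}" "m \<in> {1..N}" for n m
    by (rule measurable_compose_countable'[where I=S and g="\<lambda>\<omega>. snd (\<omega> m)"])
       (auto intro: measurable_compose[OF sample_fst_meas[OF that(1)]] sample_snd_meas[OF that(2)])
  then show ?thesis
    unfolding Z_BH_def[abs_def]
    by (intro borel_measurable_sum borel_measurable_divide measurable_compose[OF sample_fst_meas pt_meas])
       auto
qed

lemma Z_RB_meas: "Z_RB pt q \<alpha> K N \<in> borel_measurable (PiM {1..N} (\<lambda>_. Q))"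
  unfolding Z_RB_def[abs_def]
  by (intro borel_measurable_times borel_measurable_const borel_measurable_sum borel_measurable_divide
        measurable_compose[OF sample_fst_meas pt_meas] measurable_compose[OF sample_fst_meas q_meas]) auto

abbreviation "P N \<equiv> sample_law M q \<alpha> K N"

lemma bh_denom_ge_Cm:
  assumes "1 \<le> N" "ls \<in> labelings {1..N}" "y \<in> space M"
  shows "Cm \<le> bh_denom {1..N} ls y"
proof -
  have "1 * Cm \<le> real N * Cm" using assms(1) Cm_pos by (intro mult_right_mono) auto
  then show ?thesis using bh_denom_lower[OF assms(2,3)] by simp
qed

lemma mixture_scaled_ge_Cm:
  assumes "1 \<le> N" "y \<in> space M"
  shows "Cm \<le> real N * mixture y"
proof -
  have "1 * Cm \<le> real N * mixture y" using assms mixture_lower Cm_pos by (intro mult_mono) auto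
  then show ?thesis by simp
qed

lemma bh_denom_nonzero:
  assumes "1 \<le> N" "ls \<in> labelings {1..N}" "y \<in> space M"
  shows "bh_denom {1..N} ls y \<noteq> 0"
  using bh_denom_ge_Cm[OF assms] Cm_pos by linarith

lemma conditional_mean_Z_BH:
  assumes N: "1 \<le> N" and ls: "ls \<in> labelings {1..N}"
  shows "(\<Sum>n\<in>{1..N}. \<integral>y. q (ls n) y * (pt y / bh_denom {1..N} ls y) \<partial>M) = Z"
proof -
  have "(\<Sum>n\<in>{1..N}. \<integral>y. q (ls n) y * (pt y / bh_denom {1..N} ls y) \<partial>M)
      = (\<integral>y. bh_denom {1..N} ls y * (pt y / bh_denom {1..N} ls y) \<partial>M)"
    using bh_denom_ge_Cm[OF N ls]
    by (intro sum_integral_bh_denom[OF _ ls] weighted_ratio_integrable[OF bh_denom_meas[OF ls]]) auto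
  also have "\<dots> = Z"
    using bh_denom_nonzero[OF N ls] by (intro Bochner_Integration.integral_cong) simp_all
  finally show ?thesis .
qed

lemma conditional_second_moment_Z_BH_le:
  assumes N: "1 \<le> N" and ls: "ls \<in> labelings {1..N}" and pt2: "integrable M (\<lambda>y. (pt y)\<^sup>2)"
  defines "u \<equiv> \<lambda>y. pt y / bh_denom {1..N} ls y"
  shows "(\<Sum>n\<in>{1..N}. \<Sum>n'\<in>{1..N}. if n = n' then \<integral>y. q (ls n) y * (u y)\<^sup>2 \<partial>M
             else (\<integral>y. q (ls n) y * u y \<partial>M) * (\<integral>y. q (ls n') y * u y \<partial>M))
         \<le> (\<integral>y. (pt y)\<^sup>2 / bh_denom {1..N} ls y \<partial>M) + (Z\<^sup>2 - Z\<^sup>2 / real N)"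
proof -
  let ?I = "{1..N}"
  define a where "a n = (\<integral>y. q (ls n) y * u y \<partial>M)" for n
  have d: "\<And>y. y \<in> space M \<Longrightarrow> Cm \<le> bh_denom ?I ls y" by (rule bh_denom_ge_Cm[OF N ls])
  have sum_a: "sum a ?I = Z"
    unfolding a_def u_def by (rule conditional_mean_Z_BH[OF N ls])
  have "(\<Sum>n\<in>?I. \<integral>y. q (ls n) y * (u y)\<^sup>2 \<partial>M) = (\<integral>y. bh_denom ?I ls y * (u y)\<^sup>2 \<partial>M)"
    unfolding u_def
    by (intro sum_integral_bh_denom[OF _ ls] weighted_ratio_sq_integrable[OF pt2 bh_denom_meas[OF ls] d]) auto
  also have "\<dots> = (\<integral>y. (pt y)\<^sup>2 / bh_denom ?I ls y \<partial>M)"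
    unfolding u_def using bh_denom_nonzero[OF N ls]
    by (intro Bochner_Integration.integral_cong refl) (simp add: power2_eq_square)
  finally have sum_b: "(\<Sum>n\<in>?I. \<integral>y. q (ls n) y * (u y)\<^sup>2 \<partial>M) = (\<integral>y. (pt y)\<^sup>2 / bh_denom ?I ls y \<partial>M)" .
  have "Z\<^sup>2 \<le> (\<Sum>n\<in>?I. (a n)\<^sup>2) * real N"
    using sum_squared_le_sum_of_squares[of a ?I] sum_a by simp
  then have "Z\<^sup>2 / real N \<le> (\<Sum>n\<in>?I. (a n)\<^sup>2)"
    using N by (simp add: divide_le_eq)
  then show ?thesis
    unfolding a_def[symmetric] sum_square_replace_diagonal[OF finite_atLeastAtMost] sum_a sum_b
    by simp
qed

lemma mixture_nonzero: "y \<in> space M \<Longrightarrow> mixture y \<noteq> 0"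
  using mixture_lower Cm_pos by (metis not_le)

lemma Z_BH_mean:
  assumes N: "1 \<le> N"
  shows "integrable (P N) (Z_BH pt q N) \<and> (\<integral>\<omega>. Z_BH pt q N \<omega> \<partial>P N) = Z"
proof -
  let ?I = "{1..N}"
  have "(\<integral>\<^sup>+\<omega>. ennreal (Z_BH pt q N \<omega>) \<partial>P N) = ennreal (\<Sum>ls\<in>labelings ?I. label_prob ?I ls * Z)"
    unfolding sample_law_def
  proof (rule nn_integral_sample_eq_label_average)
    fix ls assume ls: "ls \<in> labelings ?I"
    have d: "\<And>y. y \<in> space M \<Longrightarrow> Cm \<le> bh_denom ?I ls y" by (rule bh_denom_ge_Cm[OF N ls])
    show "(\<integral>\<^sup>+x. (\<Prod>n\<in>?I. pair_density (x n, ls n)) * ennreal (Z_BH pt q N (\<lambda>n\<in>?I. (x n, ls n))) \<partial>PiM ?I (\<lambda>_. M))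
        = ennreal (label_prob ?I ls * Z)"
      unfolding Z_BH_labelled conditional_mean_Z_BH[OF N ls, symmetric]
      using ratio_nonneg d weighted_ratio_integrable[OF bh_denom_meas[OF ls] d] bh_denom_meas[OF ls]
      by (intro nn_integral_sum_given_labels[OF _ ls]) auto
  qed (use Z_pos Z_BH_meas in auto)
  also have "\<dots> = ennreal Z"
    by (simp add: sum_distrib_right[symmetric] label_prob_sum)
  finally show ?thesis
    using Z_pos Z_BH_meas Z_BH_nonneg unfolding sample_law_def
    by (subst (asm) nn_integral_eq_integrable) (auto intro: AE_I2)
qed

lemma label_average_integral_ratio_sq_le:
  assumes N: "1 \<le> N" and pt2: "integrable M (\<lambda>y. (pt y)\<^sup>2)"
  shows "(\<Sum>ls\<in>labelings {1..N}. label_prob {1..N} ls * (\<integral>y. (pt y)\<^sup>2 / bh_denom {1..N} ls y \<partial>M))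
      \<le> (\<integral>y. (pt y)\<^sup>2 / mixture y \<partial>M) / real N + Cp\<^sup>2 / (Cm^3 * (real N)\<^sup>2) * (\<integral>y. (pt y)\<^sup>2 \<partial>M)"
proof -
  let ?I = "{1..N}"
  define C where "C = Cp\<^sup>2 / (Cm^3 * (real N)\<^sup>2)"
  have int: "integrable M (\<lambda>y. label_prob ?I ls * ((pt y)\<^sup>2 / bh_denom ?I ls y))" if "ls \<in> labelings ?I" for ls
    using that by (intro integrable_mult_right ratio_sq_integrable[OF pt2] bh_denom_meas bh_denom_ge_Cm[OF N])
  have int_mix: "integrable M (\<lambda>y. (pt y)\<^sup>2 / mixture y)"
    using mixture_lower by (intro ratio_sq_integrable[OF pt2]) auto
  have "(\<Sum>ls\<in>labelings ?I. label_prob ?I ls * (\<integral>y. (pt y)\<^sup>2 / bh_denom ?I ls y \<partial>M))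
      = (\<Sum>ls\<in>labelings ?I. \<integral>y. label_prob ?I ls * ((pt y)\<^sup>2 / bh_denom ?I ls y) \<partial>M)"
    by (simp only: integral_mult_right_zero)
  also have "\<dots> = (\<integral>y. (\<Sum>ls\<in>labelings ?I. label_prob ?I ls * ((pt y)\<^sup>2 / bh_denom ?I ls y)) \<partial>M)"
    by (rule Bochner_Integration.integral_sum[symmetric]) (rule int)
  also have "\<dots> \<le> (\<integral>y. (pt y)\<^sup>2 / mixture y / real N + C * (pt y)\<^sup>2 \<partial>M)"
  proof (rule integral_mono)
    show "integrable M (\<lambda>y. \<Sum>ls\<in>labelings ?I. label_prob ?I ls * ((pt y)\<^sup>2 / bh_denom ?I ls y))"
      by (rule Bochner_Integration.integrable_sum) (rule int)
    show "integrable M (\<lambda>y. (pt y)\<^sup>2 / mixture y / real N + C * (pt y)\<^sup>2)"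
      by (intro Bochner_Integration.integrable_add integrable_divide integrable_mult_right int_mix pt2)
  next
    fix y assume y: "y \<in> space M"
    have "(\<Sum>ls\<in>labelings ?I. label_prob ?I ls * ((pt y)\<^sup>2 / bh_denom ?I ls y))
        = (pt y)\<^sup>2 * (\<Sum>ls\<in>labelings ?I. label_prob ?I ls / bh_denom ?I ls y)"
      by (simp add: sum_distrib_left mult.commute)
    also have "\<dots> \<le> (pt y)\<^sup>2 * (1 / (real N * mixture y) + C)"
      using label_average_inverse_bh_denom_le[of ?I y] y N by (intro mult_left_mono) (auto simp: C_def)
    also have "\<dots> = (pt y)\<^sup>2 / mixture y / real N + C * (pt y)\<^sup>2"
      by (simp add: distrib_left mult.commute)
    finally show "(\<Sum>ls\<in>labelings ?I. label_prob ?I ls * ((pt y)\<^sup>2 / bh_denom ?I ls y))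
        \<le> (pt y)\<^sup>2 / mixture y / real N + C * (pt y)\<^sup>2" .
  qed
  also have "\<dots> = (\<integral>y. (pt y)\<^sup>2 / mixture y \<partial>M) / real N + C * (\<integral>y. (pt y)\<^sup>2 \<partial>M)"
    using int_mix pt2 by (simp del: divide_divide_eq_left add: Bochner_Integration.integral_add)
  finally show ?thesis unfolding C_def .
qed

lemma Z_BH_second_moment_le:
  assumes N: "1 \<le> N" and pt2: "integrable M (\<lambda>y. (pt y)\<^sup>2)"
  shows "integrable (P N) (\<lambda>\<omega>. (Z_BH pt q N \<omega>)\<^sup>2) \<and>
    (\<integral>\<omega>. (Z_BH pt q N \<omega>)\<^sup>2 \<partial>P N) \<le> Z\<^sup>2 - Z\<^sup>2 / real N + (\<integral>y. (pt y)\<^sup>2 / mixture y \<partial>M) / real N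
        + Cp\<^sup>2 / (Cm^3 * (real N)\<^sup>2) * (\<integral>y. (pt y)\<^sup>2 \<partial>M)"
proof -
  let ?I = "{1..N}"
  define u where "u ls y = pt y / bh_denom ?I ls y" for ls y
  define g where "g ls = (\<Sum>n\<in>?I. \<Sum>n'\<in>?I. if n = n' then \<integral>y. q (ls n) y * (u ls y)\<^sup>2 \<partial>M
      else (\<integral>y. q (ls n) y * u ls y \<partial>M) * (\<integral>y. q (ls n') y * u ls y \<partial>M))" for ls
  have d: "\<And>y. y \<in> space M \<Longrightarrow> Cm \<le> bh_denom ?I ls y" if "ls \<in> labelings ?I" for ls
    by (rule bh_denom_ge_Cm[OF N that])
  have u_nonneg: "0 \<le> u ls y" if "ls \<in> labelings ?I" "y \<in> space M" for ls y
    unfolding u_def using that d ratio_nonneg by blast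
  have g_nonneg: "0 \<le> g ls" if ls: "ls \<in> labelings ?I" for ls
    unfolding g_def using PiE_mem[OF ls] q_nonneg u_nonneg[OF ls]
    by (intro sum_nonneg) (auto intro!: mult_nonneg_nonneg integral_nonneg_AE AE_I2)
  have "(\<integral>\<^sup>+\<omega>. ennreal ((Z_BH pt q N \<omega>)\<^sup>2) \<partial>P N) = ennreal (\<Sum>ls\<in>labelings ?I. label_prob ?I ls * g ls)"
    unfolding sample_law_def
  proof (rule nn_integral_sample_eq_label_average)
    fix ls assume ls: "ls \<in> labelings ?I"
    show "(\<integral>\<^sup>+x. (\<Prod>n\<in>?I. pair_density (x n, ls n)) * ennreal ((Z_BH pt q N (\<lambda>n\<in>?I. (x n, ls n)))\<^sup>2) \<partial>PiM ?I (\<lambda>_. M))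
        = ennreal (label_prob ?I ls * g ls)"
      unfolding Z_BH_labelled g_def u_def
      using ratio_nonneg d[OF ls] bh_denom_meas[OF ls] weighted_ratio_integrable[OF bh_denom_meas[OF ls] d[OF ls]]
        weighted_ratio_sq_integrable[OF pt2 bh_denom_meas[OF ls] d[OF ls]]
      by (intro nn_integral_sum_sq_given_labels[OF _ ls]) auto
  qed (use g_nonneg Z_BH_meas in auto)
  moreover have "(\<Sum>ls\<in>labelings ?I. label_prob ?I ls * g ls)
      \<le> (\<Sum>ls\<in>labelings ?I. label_prob ?I ls * ((\<integral>y. (pt y)\<^sup>2 / bh_denom ?I ls y \<partial>M) + (Z\<^sup>2 - Z\<^sup>2 / real N)))"
    unfolding g_def u_def
    by (intro sum_mono mult_left_mono conditional_second_moment_Z_BH_le[OF N _ pt2] label_prob_nonneg)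
  moreover have "\<dots> = (\<Sum>ls\<in>labelings ?I. label_prob ?I ls * (\<integral>y. (pt y)\<^sup>2 / bh_denom ?I ls y \<partial>M))
      + (Z\<^sup>2 - Z\<^sup>2 / real N)"
    by (simp add: distrib_left sum.distrib sum_distrib_right[symmetric] label_prob_sum)
  ultimately show ?thesis
    using label_average_integral_ratio_sq_le[OF N pt2] g_nonneg label_prob_nonneg Z_BH_meas
    unfolding sample_law_def
    by (subst (asm) nn_integral_eq_integrable) (auto intro!: sum_nonneg)
qed

lemma mixture_average_moments:
  assumes N: "1 \<le> N"
  defines "u \<equiv> \<lambda>y. pt y / (real N * mixture y)"
  shows "(\<Sum>s\<in>S. \<alpha> s * (\<integral>y. q s y * u y \<partial>M)) = Z / real N"
    and "integrable M (\<lambda>y. (pt y)\<^sup>2) \<Longrightarrow>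
      (\<Sum>s\<in>S. \<alpha> s * (\<integral>y. q s y * (u y)\<^sup>2 \<partial>M)) = (\<integral>y. (pt y)\<^sup>2 / mixture y \<partial>M) / (real N)\<^sup>2"
proof -
  have d: "\<And>y. y \<in> space M \<Longrightarrow> Cm \<le> real N * mixture y" by (rule mixture_scaled_ge_Cm[OF N])
  have "(\<Sum>s\<in>S. \<alpha> s * (\<integral>y. q s y * u y \<partial>M)) = (\<integral>y. mixture y * u y \<partial>M)"
    unfolding u_def using d by (intro sum_integral_mixture weighted_ratio_integrable) auto
  also have "\<dots> = (\<integral>y. pt y / real N \<partial>M)"
    unfolding u_def using mixture_nonzero by (intro Bochner_Integration.integral_cong) auto
  finally show "(\<Sum>s\<in>S. \<alpha> s * (\<integral>y. q s y * u y \<partial>M)) = Z / real N" by simp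
  assume pt2: "integrable M (\<lambda>y. (pt y)\<^sup>2)"
  have "(\<Sum>s\<in>S. \<alpha> s * (\<integral>y. q s y * (u y)\<^sup>2 \<partial>M)) = (\<integral>y. mixture y * (u y)\<^sup>2 \<partial>M)"
    unfolding u_def using d by (intro sum_integral_mixture weighted_ratio_sq_integrable[OF pt2]) auto
  also have "\<dots> = (\<integral>y. (pt y)\<^sup>2 / mixture y / (real N)\<^sup>2 \<partial>M)"
    unfolding u_def using mixture_nonzero
    by (intro Bochner_Integration.integral_cong) (auto simp: power2_eq_square)
  finally show "(\<Sum>s\<in>S. \<alpha> s * (\<integral>y. q s y * (u y)\<^sup>2 \<partial>M)) = (\<integral>y. (pt y)\<^sup>2 / mixture y \<partial>M) / (real N)\<^sup>2"
    by (simp del: divide_divide_eq_left)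
qed

lemma Z_RB_mean:
  assumes N: "1 \<le> N"
  shows "integrable (P N) (Z_RB pt q \<alpha> K N) \<and> (\<integral>\<omega>. Z_RB pt q \<alpha> K N \<omega> \<partial>P N) = Z"
proof -
  let ?I = "{1..N}"
  define u where "u y = pt y / (real N * mixture y)" for y
  define c where "c s = (\<integral>y. q s y * u y \<partial>M)" for s
  have d: "\<And>y. y \<in> space M \<Longrightarrow> Cm \<le> real N * mixture y" by (rule mixture_scaled_ge_Cm[OF N])
  have u_nonneg: "y \<in> space M \<Longrightarrow> 0 \<le> u y" for y unfolding u_def using ratio_nonneg d by blast
  have "(\<integral>\<^sup>+\<omega>. ennreal (Z_RB pt q \<alpha> K N \<omega>) \<partial>P N)
      = ennreal (\<Sum>ls\<in>labelings ?I. label_prob ?I ls * (\<Sum>n\<in>?I. c (ls n)))"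
    unfolding sample_law_def
  proof (rule nn_integral_sample_eq_label_average)
    fix ls assume ls: "ls \<in> labelings ?I"
    show "(\<integral>\<^sup>+x. (\<Prod>n\<in>?I. pair_density (x n, ls n)) * ennreal (Z_RB pt q \<alpha> K N (\<lambda>n\<in>?I. (x n, ls n))) \<partial>PiM ?I (\<lambda>_. M))
        = ennreal (label_prob ?I ls * (\<Sum>n\<in>?I. c (ls n)))"
      unfolding Z_RB_labelled c_def u_def using ratio_nonneg d weighted_ratio_integrable[OF _ d]
      by (intro nn_integral_sum_given_labels[OF _ ls]) auto
  next
    fix ls assume ls: "ls \<in> labelings ?I"
    show "0 \<le> (\<Sum>n\<in>?I. c (ls n))"
      unfolding c_def using PiE_mem[OF ls] q_nonneg u_nonneg
      by (intro sum_nonneg integral_nonneg_AE AE_I2 mult_nonneg_nonneg) auto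
  qed (use Z_RB_meas in auto)
  also have "(\<Sum>ls\<in>labelings ?I. label_prob ?I ls * (\<Sum>n\<in>?I. c (ls n))) = real N * (\<Sum>s\<in>S. \<alpha> s * c s)"
    using label_average_sum[of ?I c] by simp
  also have "\<dots> = Z"
    using N mixture_average_moments(1)[OF N] by (simp add: c_def u_def)
  finally show ?thesis
    using Z_pos Z_RB_meas Z_RB_nonneg unfolding sample_law_def
    by (subst (asm) nn_integral_eq_integrable) (auto intro: AE_I2)
qed

lemma Z_RB_second_moment:
  assumes N: "1 \<le> N" and pt2: "integrable M (\<lambda>y. (pt y)\<^sup>2)"
  shows "integrable (P N) (\<lambda>\<omega>. (Z_RB pt q \<alpha> K N \<omega>)\<^sup>2) \<and>
    (\<integral>\<omega>. (Z_RB pt q \<alpha> K N \<omega>)\<^sup>2 \<partial>P N) = Z\<^sup>2 - Z\<^sup>2 / real N + (\<integral>y. (pt y)\<^sup>2 / mixture y \<partial>M) / real N"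
proof -
  let ?I = "{1..N}"
  define u where "u y = pt y / (real N * mixture y)" for y
  define b where "b s = (\<integral>y. q s y * (u y)\<^sup>2 \<partial>M)" for s
  define c where "c s = (\<integral>y. q s y * u y \<partial>M)" for s
  define g where "g ls = (\<Sum>n\<in>?I. \<Sum>n'\<in>?I. if n = n' then b (ls n) else c (ls n) * c (ls n'))" for ls
  have d: "\<And>y. y \<in> space M \<Longrightarrow> Cm \<le> real N * mixture y" by (rule mixture_scaled_ge_Cm[OF N])
  have u_nonneg: "y \<in> space M \<Longrightarrow> 0 \<le> u y" for y unfolding u_def using ratio_nonneg d by blast
  have b_nonneg: "s \<in> S \<Longrightarrow> 0 \<le> b s" and c_nonneg: "s \<in> S \<Longrightarrow> 0 \<le> c s" for s
    unfolding b_def c_def using q_nonneg u_nonneg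
    by (auto intro!: integral_nonneg_AE AE_I2 mult_nonneg_nonneg)
  have g_nonneg: "0 \<le> g ls" if ls: "ls \<in> labelings ?I" for ls
    unfolding g_def using PiE_mem[OF ls] b_nonneg c_nonneg by (intro sum_nonneg) auto
  have "(\<integral>\<^sup>+\<omega>. ennreal ((Z_RB pt q \<alpha> K N \<omega>)\<^sup>2) \<partial>P N) = ennreal (\<Sum>ls\<in>labelings ?I. label_prob ?I ls * g ls)"
    unfolding sample_law_def
  proof (rule nn_integral_sample_eq_label_average)
    fix ls assume ls: "ls \<in> labelings ?I"
    show "(\<integral>\<^sup>+x. (\<Prod>n\<in>?I. pair_density (x n, ls n)) * ennreal ((Z_RB pt q \<alpha> K N (\<lambda>n\<in>?I. (x n, ls n)))\<^sup>2) \<partial>PiM ?I (\<lambda>_. M))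
        = ennreal (label_prob ?I ls * g ls)"
      unfolding Z_RB_labelled g_def b_def c_def u_def
      using ratio_nonneg d weighted_ratio_integrable[OF _ d] weighted_ratio_sq_integrable[OF pt2 _ d]
      by (intro nn_integral_sum_sq_given_labels[OF _ ls]) auto
  qed (use g_nonneg Z_RB_meas in auto)
  moreover have "(\<Sum>ls\<in>labelings ?I. label_prob ?I ls * g ls)
      = Z\<^sup>2 - Z\<^sup>2 / real N + (\<integral>y. (pt y)\<^sup>2 / mixture y \<partial>M) / real N"
  proof -
    define A where "A = (\<integral>y. (pt y)\<^sup>2 / mixture y \<partial>M)"
    have B: "(\<Sum>s\<in>S. \<alpha> s * b s) = A / (real N)\<^sup>2" and C: "(\<Sum>s\<in>S. \<alpha> s * c s) = Z / real N"
      using mixture_average_moments[OF N] pt2 unfolding A_def b_def c_def u_def by auto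
    show ?thesis
      unfolding g_def label_average_pair_sum[OF finite_atLeastAtMost] B C A_def[symmetric]
      using N by (simp add: field_simps power2_eq_square)
  qed
  moreover have "0 \<le> (\<Sum>ls\<in>labelings ?I. label_prob ?I ls * g ls)"
    using g_nonneg label_prob_nonneg by (intro sum_nonneg mult_nonneg_nonneg)
  ultimately show ?thesis
    using Z_RB_meas unfolding sample_law_def
    by (subst (asm) nn_integral_eq_integrable) auto
qed

lemma prob_space_sample: "prob_space (P N)"
  unfolding sample_law_def by (rule prob_space_PiM) (rule prob_space_pair_law)

lemma Z_BH_ge_first_term:
  assumes N: "1 \<le> N" and \<omega>: "\<omega> \<in> space (P N)"
  shows "pt (fst (\<omega> 1)) / (real N * Cp) \<le> Z_BH pt q N \<omega>"
proof -
  let ?I = "{1..N}"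
  have \<omega>n: "n \<in> ?I \<Longrightarrow> fst (\<omega> n) \<in> space M \<and> snd (\<omega> n) \<in> S" for n
    using \<omega> unfolding sample_law_def by (rule space_sample)
  define D where "D n = (\<Sum>m\<in>?I. q (snd (\<omega> m)) (fst (\<omega> n)))" for n
  have D: "0 < D n" "D n \<le> real N * Cp" if n: "n \<in> ?I" for n
  proof -
    have "(\<Sum>m\<in>?I. Cm) \<le> D n"
      unfolding D_def using \<omega>n n by (intro sum_mono q_lower) auto
    moreover have "D n \<le> (\<Sum>m\<in>?I. Cp)"
      unfolding D_def using \<omega>n n by (intro sum_mono q_upper) auto
    moreover have "0 < real N * Cm" using N Cm_pos by simp
    ultimately show "0 < D n" "D n \<le> real N * Cp" by auto
  qed
  have one: "1 \<in> ?I" using N by simp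
  have "pt (fst (\<omega> 1)) / (real N * Cp) \<le> pt (fst (\<omega> 1)) / D 1"
    using pt_nonneg \<omega>n[OF one] D[OF one] by (intro divide_left_mono) auto
  also have "\<dots> \<le> (\<Sum>n\<in>?I. pt (fst (\<omega> n)) / D n)"
  proof (rule member_le_sum[OF one])
    fix n assume "n \<in> ?I - {1}"
    then have n: "n \<in> ?I" by simp
    show "0 \<le> pt (fst (\<omega> n)) / D n" using pt_nonneg \<omega>n[OF n] D(1)[OF n] by simp
  qed simp
  finally show ?thesis by (simp add: Z_BH_def D_def)
qed

lemma Z_RB_ge_first_term:
  assumes N: "1 \<le> N" and \<omega>: "\<omega> \<in> space (P N)"
  shows "pt (fst (\<omega> 1)) / (real N * Cp) \<le> Z_RB pt q \<alpha> K N \<omega>"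
proof -
  let ?I = "{1..N}"
  have \<omega>n: "n \<in> ?I \<Longrightarrow> fst (\<omega> n) \<in> space M" for n
    using space_sample[OF \<omega>[unfolded sample_law_def]] by blast
  have one: "1 \<in> ?I" using N by simp
  have mix: "0 < mixture (fst (\<omega> n))" "mixture (fst (\<omega> n)) \<le> Cp" if "n \<in> ?I" for n
    using mixture_lower[OF \<omega>n[OF that]] mixture_upper[OF \<omega>n[OF that]] Cm_pos by auto
  have "pt (fst (\<omega> 1)) / Cp \<le> pt (fst (\<omega> 1)) / mixture (fst (\<omega> 1))"
    using pt_nonneg \<omega>n[OF one] mix[OF one] by (intro divide_left_mono) auto
  also have "\<dots> \<le> (\<Sum>n\<in>?I. pt (fst (\<omega> n)) / mixture (fst (\<omega> n)))"
  proof (rule member_le_sum[OF one])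
    fix n assume "n \<in> ?I - {1}"
    then have n: "n \<in> ?I" by simp
    show "0 \<le> pt (fst (\<omega> n)) / mixture (fst (\<omega> n))" using pt_nonneg \<omega>n[OF n] mix(1)[OF n] by simp
  qed simp
  finally have "pt (fst (\<omega> 1)) / Cp / real N \<le> (\<Sum>n\<in>?I. pt (fst (\<omega> n)) / mixture (fst (\<omega> n))) / real N"
    by (rule divide_right_mono) simp
  then show ?thesis by (simp add: Z_RB_def mixture_def mult.commute)
qed

lemma nn_integral_first_sample_sq_infinite:
  assumes N: "1 \<le> N" and pt2: "\<not> integrable M (\<lambda>y. (pt y)\<^sup>2)"
  shows "(\<integral>\<^sup>+\<omega>. ennreal ((pt (fst (\<omega> 1)))\<^sup>2) \<partial>P N) = \<infinity>"
proof -
  have "\<exists>s\<in>S. 0 < \<alpha> s"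
  proof (rule ccontr)
    assume "\<not> (\<exists>s\<in>S. 0 < \<alpha> s)"
    then have "\<forall>s\<in>S. \<alpha> s = 0" using \<alpha>_nonneg by force
    then show False using \<alpha>_sum by simp
  qed
  then obtain s where s: "s \<in> S" "0 < \<alpha> s" by blast
  have h: "(\<lambda>y. (pt (fst y))\<^sup>2) \<in> borel_measurable (M \<Otimes>\<^sub>M count_space S)"
    by measurable
  have "(\<integral>\<^sup>+y. ennreal ((pt y)\<^sup>2) \<partial>M) = \<infinity>"
    using pt2 by (auto intro: integrableI_nonneg simp: top.not_eq_extremum)
  then have "\<infinity> = ennreal (\<alpha> s * Cm) * (\<integral>\<^sup>+y. ennreal ((pt y)\<^sup>2) \<partial>M)"
    using s Cm_pos by (simp add: ennreal_mult_top)
  also have "\<dots> = (\<integral>\<^sup>+y. ennreal (\<alpha> s * Cm * (pt y)\<^sup>2) \<partial>M)"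
    using s Cm_pos by (subst nn_integral_cmult[symmetric]) (auto simp: ennreal_mult)
  also have "\<dots> \<le> (\<integral>\<^sup>+y. ennreal (\<alpha> s * q s y) * ennreal ((pt y)\<^sup>2) \<partial>M)"
  proof (rule nn_integral_mono)
    fix y assume y: "y \<in> space M"
    have "\<alpha> s * Cm * (pt y)\<^sup>2 \<le> \<alpha> s * q s y * (pt y)\<^sup>2"
      using s q_lower[OF s(1) y] by (intro mult_right_mono mult_left_mono) auto
    then show "ennreal (\<alpha> s * Cm * (pt y)\<^sup>2) \<le> ennreal (\<alpha> s * q s y) * ennreal ((pt y)\<^sup>2)"
      using s q_nonneg[OF s(1) y] by (subst ennreal_mult'[symmetric]) (auto intro: ennreal_leI)
  qed
  also have "\<dots> \<le> (\<Sum>l\<in>S. \<integral>\<^sup>+y. ennreal (\<alpha> l * q l y) * ennreal ((pt y)\<^sup>2) \<partial>M)"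
    by (rule member_le_sum[OF s(1)]) auto
  also have "\<dots> = (\<integral>\<^sup>+y. ennreal ((pt (fst y))\<^sup>2) \<partial>Q)"
    using h by (subst nn_integral_pair_law) auto
  also have "\<dots> = (\<integral>\<^sup>+y. ennreal ((pt (fst y))\<^sup>2) \<partial>distr (P N) Q (\<lambda>\<omega>. \<omega> 1))"
    using distr_PiM_component[OF prob_space_pair_law, of 1 "{1..N}"] N by (simp add: sample_law_def)
  also have "\<dots> = (\<integral>\<^sup>+\<omega>. ennreal ((pt (fst (\<omega> 1)))\<^sup>2) \<partial>P N)"
    unfolding sample_law_def using h N
    by (intro nn_integral_distr measurable_component_singleton) (auto simp: measurable_pair_law_domain)
  finally show ?thesis by (simp add: top_unique)
qed

lemma not_square_integrable_if_ge_first_term: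
  assumes N: "1 \<le> N" and pt2: "\<not> integrable M (\<lambda>y. (pt y)\<^sup>2)"
    and G[measurable]: "G \<in> borel_measurable (P N)"
    and G_ge: "\<And>\<omega>. \<omega> \<in> space (P N) \<Longrightarrow> pt (fst (\<omega> 1)) / (real N * Cp) \<le> G \<omega>"
  shows "\<not> integrable (P N) (\<lambda>\<omega>. (G \<omega>)\<^sup>2)"
proof
  define c where "c = (real N * Cp)\<^sup>2"
  assume "integrable (P N) (\<lambda>\<omega>. (G \<omega>)\<^sup>2)"
  then have "integrable (P N) (\<lambda>\<omega>. c * (G \<omega>)\<^sup>2)" by simp
  then have "(\<integral>\<^sup>+\<omega>. ennreal (c * (G \<omega>)\<^sup>2) \<partial>P N) = ennreal (\<integral>\<omega>. c * (G \<omega>)\<^sup>2 \<partial>P N)"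
    by (rule nn_integral_eq_integral) (simp add: c_def)
  then have "(\<integral>\<^sup>+\<omega>. ennreal (c * (G \<omega>)\<^sup>2) \<partial>P N) < \<infinity>" by simp
  moreover have "(\<integral>\<^sup>+\<omega>. ennreal ((pt (fst (\<omega> 1)))\<^sup>2) \<partial>P N) \<le> (\<integral>\<^sup>+\<omega>. ennreal (c * (G \<omega>)\<^sup>2) \<partial>P N)"
  proof (intro nn_integral_mono ennreal_leI)
    fix \<omega> assume \<omega>: "\<omega> \<in> space (P N)"
    have "0 \<le> pt (fst (\<omega> 1))"
      using \<omega> space_sample[of \<omega> "{1..N}" 1] pt_nonneg N by (auto simp: sample_law_def)
    then have "(pt (fst (\<omega> 1)) / (real N * Cp))\<^sup>2 \<le> (G \<omega>)\<^sup>2"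
      using G_ge[OF \<omega>] N Cp_pos by (intro power_mono) auto
    then show "(pt (fst (\<omega> 1)))\<^sup>2 \<le> c * (G \<omega>)\<^sup>2"
      using N Cp_pos by (simp add: c_def power_divide field_simps)
  qed
  ultimately show False
    using nn_integral_first_sample_sq_infinite[OF N pt2] by simp
qed

lemma integral_sq_div_mixture_le:
  assumes pt2: "integrable M (\<lambda>y. (pt y)\<^sup>2)"
  shows "(\<integral>y. (pt y)\<^sup>2 / mixture y \<partial>M) \<le> (\<integral>y. (pt y)\<^sup>2 \<partial>M) / Cm"
proof -
  have "(\<integral>y. (pt y)\<^sup>2 / mixture y \<partial>M) \<le> (\<integral>y. (pt y)\<^sup>2 / Cm \<partial>M)"
    using mixture_lower Cm_pos pt2 less_le_trans[OF Cm_pos mixture_lower]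
    by (intro integral_mono ratio_sq_integrable[OF pt2] divide_left_mono) auto
  then show ?thesis by simp
qed

lemma variance_difference_bounds_square_integrable:
  assumes N: "1 \<le> N" and pt2: "integrable M (\<lambda>y. (pt y)\<^sup>2)"
  defines "A2 \<equiv> \<integral>y. (pt y)\<^sup>2 \<partial>M"
  shows "variance_of (P N) (Z_BH pt q N) - variance_of (P N) (Z_RB pt q \<alpha> K N)
           \<le> Cp\<^sup>2 / Cm^3 * A2 / (real N)\<^sup>2"
    and "- (A2 / Cm) / real N
           \<le> variance_of (P N) (Z_BH pt q N) - variance_of (P N) (Z_RB pt q \<alpha> K N)"
proof -
  interpret P: prob_space "P N" by (rule prob_space_sample)
  define A where "A = (\<integral>y. (pt y)\<^sup>2 / mixture y \<partial>M)"
  have BH: "variance_of (P N) (Z_BH pt q N)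
      \<le> A / real N - Z\<^sup>2 / real N + Cp\<^sup>2 / Cm^3 * A2 / (real N)\<^sup>2"
    using Z_BH_mean[OF N] Z_BH_second_moment_le[OF N pt2]
    by (simp add: P.variance_of_eq_moments A_def A2_def)
  have RB: "variance_of (P N) (Z_RB pt q \<alpha> K N) = A / real N - Z\<^sup>2 / real N"
    using Z_RB_mean[OF N] Z_RB_second_moment[OF N pt2]
    by (simp add: P.variance_of_eq_moments A_def)
  show "variance_of (P N) (Z_BH pt q N) - variance_of (P N) (Z_RB pt q \<alpha> K N)
      \<le> Cp\<^sup>2 / Cm^3 * A2 / (real N)\<^sup>2"
    using BH RB by linarith
  have "A / real N \<le> (A2 / Cm) / real N"
    using divide_right_mono[OF integral_sq_div_mixture_le[OF pt2], of "real N"] by (simp add: A_def A2_def)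
  moreover have "0 \<le> Z\<^sup>2 / real N" by simp
  ultimately show "- (A2 / Cm) / real N
      \<le> variance_of (P N) (Z_BH pt q N) - variance_of (P N) (Z_RB pt q \<alpha> K N)"
    using RB variance_of_nonneg[of "P N" "Z_BH pt q N"] by linarith
qed

lemma variances_eq_0_if_not_square_integrable:
  assumes N: "1 \<le> N" and pt2: "\<not> integrable M (\<lambda>y. (pt y)\<^sup>2)"
  shows "variance_of (P N) (Z_BH pt q N) = 0" and "variance_of (P N) (Z_RB pt q \<alpha> K N) = 0"
proof -
  interpret P: prob_space "P N" by (rule prob_space_sample)
  have BH_meas: "Z_BH pt q N \<in> borel_measurable (P N)"
    and RB_meas: "Z_RB pt q \<alpha> K N \<in> borel_measurable (P N)"
    using Z_BH_meas Z_RB_meas by (simp_all add: sample_law_def)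
  show "variance_of (P N) (Z_BH pt q N) = 0"
    by (intro P.variance_of_eq_0_if_not_square_integrable BH_meas
        not_square_integrable_if_ge_first_term[OF N pt2 BH_meas Z_BH_ge_first_term[OF N]])
  show "variance_of (P N) (Z_RB pt q \<alpha> K N) = 0"
    by (intro P.variance_of_eq_0_if_not_square_integrable RB_meas
        not_square_integrable_if_ge_first_term[OF N pt2 RB_meas Z_RB_ge_first_term[OF N]])
qed

text \<open>Without square integrability of \<open>pt\<close> both variances are junk values \<open>0\<close>, and so is
  \<open>A2\<close>; the bounds then hold trivially.\<close>
lemma normalized_variance_difference_bounds:
  assumes N: "1 \<le> N"
  defines "A2 \<equiv> \<integral>y. (pt y)\<^sup>2 \<partial>M"
    and "d \<equiv> variance_of (P N) (\<lambda>\<omega>. Z_BH pt q N \<omega> / Z) - variance_of (P N) (\<lambda>\<omega>. Z_RB pt q \<alpha> K N \<omega> / Z)"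
  shows "d \<le> (Cp\<^sup>2 / Cm^3 * A2 / Z\<^sup>2) / (real N)\<^sup>2" and "- (A2 / Cm / Z\<^sup>2) / real N \<le> d"
proof -
  have "variance_of (P N) (Z_BH pt q N) - variance_of (P N) (Z_RB pt q \<alpha> K N)
          \<le> Cp\<^sup>2 / Cm^3 * A2 / (real N)\<^sup>2 \<and>
        - (A2 / Cm) / real N
          \<le> variance_of (P N) (Z_BH pt q N) - variance_of (P N) (Z_RB pt q \<alpha> K N)"
  proof (cases "integrable M (\<lambda>y. (pt y)\<^sup>2)")
    case True
    then show ?thesis unfolding A2_def using variance_difference_bounds_square_integrable[OF N] by blast
  next
    case False
    then have "A2 = 0" unfolding A2_def by (rule not_integrable_integral_eq)
    with False show ?thesis using variances_eq_0_if_not_square_integrable[OF N] by simp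
  qed
  then have "d \<le> (Cp\<^sup>2 / Cm^3 * A2 / (real N)\<^sup>2) / Z\<^sup>2" "(- (A2 / Cm) / real N) / Z\<^sup>2 \<le> d"
    unfolding d_def variance_of_divide diff_divide_distrib[symmetric]
    by (meson divide_right_mono zero_le_power2)+
  then show "d \<le> (Cp\<^sup>2 / Cm^3 * A2 / Z\<^sup>2) / (real N)\<^sup>2" and "- (A2 / Cm / Z\<^sup>2) / real N \<le> d"
    by (simp_all add: mult_ac)
qed

end

theorem theorem1:
  fixes M :: "'a measure" and pt :: "'a \<Rightarrow> real" and q :: "nat \<Rightarrow> 'a \<Rightarrow> real"
    and \<alpha> :: "nat \<Rightarrow> real" and K :: nat and Cm Cp :: real
  assumes pt_meas: "pt \<in> borel_measurable M"
    and pt_nonneg: "\<forall>x\<in>space M. 0 \<le> pt x"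
    and pt_int: "integrable M pt"
    and Z_pos: "0 < (\<integral>x. pt x \<partial>M)"
    and q_dens: "\<forall>k\<in>{1..K}. q k \<in> borel_measurable M \<and> integrable M (q k) \<and> (\<integral>x. q k x \<partial>M) = 1"
    and Cm_pos: "0 < Cm" and Cp_pos: "0 < Cp"
    and q_bounds: "\<forall>k\<in>{1..K}. \<forall>x\<in>space M. Cm \<le> q k x \<and> q k x \<le> Cp"
    and \<alpha>_nonneg: "\<forall>k\<in>{1..K}. 0 \<le> \<alpha> k"
    and \<alpha>_sum: "(\<Sum>k\<in>{1..K}. \<alpha> k) = 1"
  shows "\<exists>Cl>0. \<exists>Cu>0. \<forall>N::nat. N \<ge> 1 \<longrightarrow>
           (let Z = (\<integral>x. pt x \<partial>M); P = sample_law M q \<alpha> K N;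
                d = variance_of P (\<lambda>\<omega>. Z_BH pt q N \<omega> / Z) - variance_of P (\<lambda>\<omega>. Z_RB pt q \<alpha> K N \<omega> / Z)
            in - Cl / real N \<le> d \<and> d \<le> Cu / (real N)\<^sup>2)"
proof -
  interpret mis_model M pt q \<alpha> K Cm Cp
    by (rule mis_model.intro; fact)
  define A2 where "A2 = (\<integral>y. (pt y)\<^sup>2 \<partial>M)"
  have A2: "0 \<le> A2" unfolding A2_def by simp
  show ?thesis unfolding Let_def
  proof (rule exI[of _ "A2 / Cm / Z\<^sup>2 + 1"], intro conjI exI[of _ "Cp\<^sup>2 / Cm^3 * A2 / Z\<^sup>2 + 1"] allI impI)
    fix N :: nat assume N: "1 \<le> N"
    show "- (A2 / Cm / Z\<^sup>2 + 1) / real N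
        \<le> variance_of (P N) (\<lambda>\<omega>. Z_BH pt q N \<omega> / Z) - variance_of (P N) (\<lambda>\<omega>. Z_RB pt q \<alpha> K N \<omega> / Z)"
      by (rule order.trans[OF _ normalized_variance_difference_bounds(2)[OF N]])
         (unfold A2_def, intro divide_right_mono, simp_all)
    show "variance_of (P N) (\<lambda>\<omega>. Z_BH pt q N \<omega> / Z) - variance_of (P N) (\<lambda>\<omega>. Z_RB pt q \<alpha> K N \<omega> / Z)
        \<le> (Cp\<^sup>2 / Cm^3 * A2 / Z\<^sup>2 + 1) / (real N)\<^sup>2"
      by (rule order.trans[OF normalized_variance_difference_bounds(1)[OF N]])
         (unfold A2_def, intro divide_right_mono, simp_all)
  qed (use A2 Cm_pos in \<open>simp_all add: add_nonneg_pos\<close>)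
qed

end
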